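(* Let $\mathcal{W}=\{\mathbb{R}^d;f_1,\dots,f_N;p_1,\dots,p_N\}$ be a weighted IFS with all $p_i>0$, $\sum p_i=1$, such that $s_i\|x-y\|\le\|f_i(x)-f_i(y)\|\le c_i\|x-y\|$ for all $x,y$, with $0<s_i\le c_i<1$, and assume $\mathcal{W}$ satisfies the strong open set condition. Then there is a word $\sigma\in\{1,\dots,N\}^*$ such that for every $m\in\mathbb{N}$ the weighted IFS $\mathcal{L}_m=\{\mathbb{R}^d;g_i;p_i:i\in\{1,\dots,N\}^m\}$ with $g_i=f_i\circ f_\sigma$ satisfies $S_i\|x-y\|\le\|g_i(x)-g_i(y)\|\le C_i\|x-y\|$ with $S_i=s_is_\sigma\in(0,1)$, $C_i=c_ic_\sigma\in(0,1)$, and satisfies the strong separation condition. Moreover, if $\mu_m^*$ is the invariant Borel probability measure of $\mathcal{L}_m$ and $r\in(0,\infty)$, there exists $n_0\in\mathbb{N}$ such that for every $n\ge n_0$ there are $n_i\in\mathbb{N}$ ($i\in\{1,\dots,N\}^m$) with $\sum_in_i\le n$ and $$V_{n,r}(\mu_m^* )\ge\sum_{i\in\{1,\dots,N\}^m}p_iS_i^rV_{n_i,r}(\mu_m^* ).$$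
   Context: For a word $\tau=\tau_1\cdots\tau_k$: $f_\tau=f_{\tau_1}\circ\cdots\circ f_{\tau_k}$, $p_\tau=p_{\tau_1}\cdots p_{\tau_k}$, $s_\tau=s_{\tau_1}\cdots s_{\tau_k}$, $c_\tau=c_{\tau_1}\cdots c_{\tau_k}$. The attractor $A$ of an IFS $\{\theta_k\}$ is the unique nonempty compact set with $A=\bigcup_k\theta_k(A)$. SOSC for $\mathcal{W}$: a nonempty open $U$ with $f_i(U)\subset U$, $f_i(U)\cap f_j(U)=\emptyset$ for $i\ne j$, and $U\cap A_\mathcal{W}\ne\emptyset$. SSC for $\mathcal{L}_m$: $g_i(A)\cap g_j(A)=\emptyset$ for $i\ne j$, where $A$ is the attractor of $\mathcal{L}_m$. Invariant measure of a weighted IFS $\{\theta_k;w_k\}$: unique Borel probability $\nu$ with $\nu=\sum_kw_k\nu\circ\theta_k^{-1}$. $V_{n,r}(\nu)=\inf\{\int\min_{a\in A}\|x-a\|^rd\nu(x):\operatorname{card}(A)\le n\}$. *)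

theory Defs
  imports "HOL-Probability.Probability"
begin

definition comp_word :: "('i \<Rightarrow> 'a \<Rightarrow> 'a) \<Rightarrow> 'i list \<Rightarrow> 'a \<Rightarrow> 'a" where
  "comp_word f \<tau> = foldr (\<lambda>i g. f i \<circ> g) \<tau> id"

definition prod_word :: "('i \<Rightarrow> real) \<Rightarrow> 'i list \<Rightarrow> real" where
  "prod_word p \<tau> = prod_list (map p \<tau>)"

definition words :: "nat \<Rightarrow> nat \<Rightarrow> nat list set" where
  "words N m = {\<tau>. length \<tau> = m \<and> set \<tau> \<subseteq> {1..N}}"

definition attractor :: "'i set \<Rightarrow> ('i \<Rightarrow> 'a::metric_space \<Rightarrow> 'a) \<Rightarrow> 'a set" where
  "attractor I \<theta> = (THE A. compact A \<and> A \<noteq> {} \<and> A = (\<Union>k\<in>I. \<theta> k ` A))"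

definition SOSC :: "'i set \<Rightarrow> ('i \<Rightarrow> 'a::metric_space \<Rightarrow> 'a) \<Rightarrow> bool" where
  "SOSC I f \<longleftrightarrow> (\<exists>U. open U \<and> U \<noteq> {} \<and> (\<forall>i\<in>I. f i ` U \<subseteq> U) \<and>
      (\<forall>i\<in>I. \<forall>j\<in>I. i \<noteq> j \<longrightarrow> f i ` U \<inter> f j ` U = {}) \<and> U \<inter> attractor I f \<noteq> {})"

definition SSC :: "'i set \<Rightarrow> ('i \<Rightarrow> 'a::metric_space \<Rightarrow> 'a) \<Rightarrow> bool" where
  "SSC I g \<longleftrightarrow> (\<forall>i\<in>I. \<forall>j\<in>I. i \<noteq> j \<longrightarrow> g i ` attractor I g \<inter> g j ` attractor I g = {})"

definition invariant_measure :: "'i set \<Rightarrow> ('i \<Rightarrow> 'a::metric_space \<Rightarrow> 'a) \<Rightarrow> ('i \<Rightarrow> real) \<Rightarrow> 'a measure" where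
  "invariant_measure I \<theta> w = (THE \<nu>. prob_space \<nu> \<and> sets \<nu> = sets borel \<and>
     (\<forall>B\<in>sets borel. emeasure \<nu> B = (\<Sum>k\<in>I. ennreal (w k) * emeasure \<nu> (\<theta> k -` B))))"

definition quant_error :: "nat \<Rightarrow> real \<Rightarrow> 'a::real_normed_vector measure \<Rightarrow> ennreal" where
  "quant_error n r \<nu> = (INF A\<in>{A. finite A \<and> A \<noteq> {} \<and> card A \<le> n}.
      \<integral>\<^sup>+ x. ennreal (Min ((\<lambda>a. norm (x - a) powr r) ` A)) \<partial>\<nu>)"

end

theory Submission
  imports Defs
begin

definition lists_of :: "'i set \<Rightarrow> nat \<Rightarrow> 'i list set" where
  "lists_of I n = {\<omega>. length \<omega> = n \<and> set \<omega> \<subseteq> I}"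

lemma words_eq_lists_of: "words N m = lists_of {1..N} m"
  by (simp add: words_def lists_of_def)

lemma lists_of_0 [simp]: "lists_of I 0 = {[]}"
  by (auto simp: lists_of_def)

lemma lists_of_Suc: "lists_of I (Suc n) = (\<lambda>(k, \<omega>). k # \<omega>) ` (I \<times> lists_of I n)"
proof -
  have "\<omega> \<in> (\<lambda>(k, \<omega>). k # \<omega>) ` (I \<times> lists_of I n)" if "\<omega> \<in> lists_of I (Suc n)" for \<omega>
    using that by (cases \<omega>) (auto simp: lists_of_def)
  then show ?thesis by (auto simp: lists_of_def)
qed

lemma finite_lists_of: "finite I \<Longrightarrow> finite (lists_of I n)"
  by (induction n) (auto simp: lists_of_Suc)

lemma lists_of_not_empty: "I \<noteq> {} \<Longrightarrow> lists_of I n \<noteq> {}"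
  by (induction n) (auto simp: lists_of_Suc)

lemma sum_lists_of_Suc:
  assumes "finite I"
  shows "sum g (lists_of I (Suc n)) = (\<Sum>k\<in>I. \<Sum>\<omega>\<in>lists_of I n. g (k # \<omega>))"
proof -
  have "inj_on (\<lambda>(k, \<omega>). k # \<omega>) (I \<times> lists_of I n)"
    by (auto simp: inj_on_def)
  then show ?thesis
    unfolding lists_of_Suc by (simp add: sum.reindex sum.cartesian_product split_def)
qed

lemma comp_word_Nil [simp]: "comp_word f [] = id"
  by (simp add: comp_word_def)

lemma comp_word_Cons [simp]: "comp_word f (k # \<omega>) = f k \<circ> comp_word f \<omega>"
  by (simp add: comp_word_def)

lemma comp_word_append: "comp_word f (\<omega> @ \<omega>') = comp_word f \<omega> \<circ> comp_word f \<omega>'"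
  by (induction \<omega>) auto

lemma prod_word_Nil [simp]: "prod_word p [] = 1"
  by (simp add: prod_word_def)

lemma prod_word_Cons [simp]: "prod_word p (k # \<omega>) = p k * prod_word p \<omega>"
  by (simp add: prod_word_def)

lemma prod_word_const: "prod_word (\<lambda>_. a) \<omega> = a ^ length \<omega>"
  by (induction \<omega>) auto

lemma sum_prod_word_lists_of:
  assumes "finite I"
  shows "(\<Sum>\<omega>\<in>lists_of I n. prod_word w \<omega>) = sum w I ^ n"
proof (induction n)
  case (Suc n)
  with assms show ?case
    by (simp add: sum_lists_of_Suc sum_distrib_left[symmetric] sum_distrib_right[symmetric])
qed simp

lemma prod_word_pos: "(\<And>k. k \<in> set \<omega> \<Longrightarrow> 0 < w k) \<Longrightarrow> 0 < prod_word w \<omega>"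
  by (induction \<omega>) auto

lemma prod_word_nonneg: "(\<And>k. k \<in> set \<omega> \<Longrightarrow> 0 \<le> w k) \<Longrightarrow> 0 \<le> prod_word w \<omega>"
  by (induction \<omega>) auto

lemma dist_comp_word_le:
  assumes "\<And>k x y. k \<in> set \<omega> \<Longrightarrow> dist (f k x) (f k y) \<le> c k * dist x y"
    and "\<And>k. k \<in> set \<omega> \<Longrightarrow> 0 \<le> c k"
  shows "dist (comp_word f \<omega> x) (comp_word f \<omega> y) \<le> prod_word c \<omega> * dist x y"
  using assms
proof (induction \<omega> arbitrary: x y)
  case (Cons k \<omega>)
  have "dist (comp_word f (k # \<omega>) x) (comp_word f (k # \<omega>) y)
      \<le> c k * dist (comp_word f \<omega> x) (comp_word f \<omega> y)"
    using Cons.prems(1) by simp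
  also have "\<dots> \<le> c k * (prod_word c \<omega> * dist x y)"
    using Cons by (intro mult_left_mono) auto
  finally show ?case
    by (simp add: mult.assoc)
qed simp

lemma dist_comp_word_ge:
  assumes "\<And>k x y. k \<in> set \<omega> \<Longrightarrow> s k * dist x y \<le> dist (f k x) (f k y)"
    and "\<And>k. k \<in> set \<omega> \<Longrightarrow> 0 \<le> s k"
  shows "prod_word s \<omega> * dist x y \<le> dist (comp_word f \<omega> x) (comp_word f \<omega> y)"
  using assms
proof (induction \<omega> arbitrary: x y)
  case (Cons k \<omega>)
  have "prod_word s (k # \<omega>) * dist x y \<le> s k * dist (comp_word f \<omega> x) (comp_word f \<omega> y)"
    using Cons by (simp add: mult.assoc mult_left_mono)
  also have "\<dots> \<le> dist (comp_word f (k # \<omega>) x) (comp_word f (k # \<omega>) y)"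
    using Cons.prems(1) by simp
  finally show ?case .
qed simp

lemma comp_word_image_subset:
  assumes "\<And>k. k \<in> I \<Longrightarrow> f k ` K \<subseteq> K" and "set \<omega> \<subseteq> I"
  shows "comp_word f \<omega> ` K \<subseteq> K"
  using assms(2)
proof (induction \<omega>)
  case (Cons k \<omega>)
  then have "f k ` comp_word f \<omega> ` K \<subseteq> K"
    using assms(1) by fastforce
  then show ?case
    by (simp add: image_comp)
qed simp

lemma comp_word_images_disjoint:
  assumes into: "\<And>k. k \<in> I \<Longrightarrow> f k ` U \<subseteq> U"
    and disj: "\<And>k k'. k \<in> I \<Longrightarrow> k' \<in> I \<Longrightarrow> k \<noteq> k' \<Longrightarrow> f k ` U \<inter> f k' ` U = {}"
    and inj: "\<And>k. k \<in> I \<Longrightarrow> inj (f k)"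
  shows "\<tau> \<in> lists_of I n \<Longrightarrow> \<tau>' \<in> lists_of I n \<Longrightarrow> \<tau> \<noteq> \<tau>' \<Longrightarrow>
    comp_word f \<tau> ` U \<inter> comp_word f \<tau>' ` U = {}"
proof (induction n arbitrary: \<tau> \<tau>')
  case (Suc n)
  obtain k \<omega> k' \<omega>' where \<tau>: "\<tau> = k # \<omega>" "k \<in> I" "\<omega> \<in> lists_of I n"
    and \<tau>': "\<tau>' = k' # \<omega>'" "k' \<in> I" "\<omega>' \<in> lists_of I n"
    using Suc.prems(1,2) by (auto simp: lists_of_Suc)
  have "set \<omega> \<subseteq> I" "set \<omega>' \<subseteq> I"
    using \<tau>(3) \<tau>'(3) by (auto simp: lists_of_def)
  then have sub: "comp_word f \<omega> ` U \<subseteq> U" "comp_word f \<omega>' ` U \<subseteq> U"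
    using comp_word_image_subset[of I f U, OF into] by auto
  show ?case
  proof (cases "k = k'")
    case True
    have "comp_word f \<tau> ` U \<inter> comp_word f \<tau>' ` U = f k ` (comp_word f \<omega> ` U \<inter> comp_word f \<omega>' ` U)"
      unfolding \<tau>(1) \<tau>'(1) True[symmetric] comp_word_Cons image_comp[symmetric]
      by (rule image_Int[OF inj[OF \<tau>(2)], symmetric])
    also have "\<dots> = {}"
      using Suc.IH[OF \<tau>(3) \<tau>'(3)] Suc.prems(3) True \<tau>(1) \<tau>'(1) by simp
    finally show ?thesis .
  next
    case False
    have "comp_word f \<tau> ` U \<subseteq> f k ` U" "comp_word f \<tau>' ` U \<subseteq> f k' ` U"
      using sub by (auto simp: \<tau>(1) \<tau>'(1))
    then show ?thesis
      using disj[OF \<tau>(2) \<tau>'(2) False] by blast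
  qed
qed simp
lemma invariant_eq_comp_word_images:
  assumes "B = (\<Union>k\<in>I. f k ` B)"
  shows "B = (\<Union>\<omega>\<in>lists_of I n. comp_word f \<omega> ` B)"
proof (induction n)
  case (Suc n)
  have "(\<Union>\<omega>\<in>lists_of I (Suc n). comp_word f \<omega> ` B) = (\<Union>k\<in>I. f k ` (\<Union>\<omega>\<in>lists_of I n. comp_word f \<omega> ` B))"
    by (auto simp: lists_of_Suc image_UN image_comp) blast
  then show ?case
    using assms Suc by simp
qed simp

lemma ex_power_mult_less:
  fixes L C e :: real
  assumes "0 \<le> L" "L < 1" "0 < e"
  shows "\<exists>n. L ^ n * C < e"
proof -
  have "(\<lambda>n. L ^ n * C) \<longlonglongrightarrow> 0 * C"
    using assms by (intro tendsto_intros) auto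
  then have "eventually (\<lambda>n. L ^ n * C < e) sequentially"
    using assms by (intro order_tendstoD(2)) auto
  then show ?thesis
    by (auto simp: eventually_sequentially)
qed

lemma prod_word_append: "prod_word p (\<omega> @ \<omega>') = prod_word p \<omega> * prod_word p \<omega>'"
  by (simp add: prod_word_def)

lemma prod_word_mono:
  fixes a b :: "'i \<Rightarrow> real"
  assumes "\<And>k. k \<in> set \<omega> \<Longrightarrow> 0 \<le> a k \<and> a k \<le> b k"
  shows "prod_word a \<omega> \<le> prod_word b \<omega>"
  using assms
proof (induction \<omega>)
  case (Cons k \<omega>)
  have "0 \<le> a k" "a k \<le> b k"
    using Cons.prems by auto
  moreover have "prod_word a \<omega> \<le> prod_word b \<omega>" "0 \<le> prod_word a \<omega>"
    using Cons by (auto intro: prod_word_nonneg)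
  ultimately have "a k * prod_word a \<omega> \<le> b k * prod_word b \<omega>"
    by (intro mult_mono) simp_all
  then show ?case
    by simp
qed simp

lemma set_stake_subset: "s \<in> streams I \<Longrightarrow> set (stake n s) \<subseteq> I"
  by (induction n arbitrary: s) (auto dest: streams_shd streams_stl)

lemma sdrop_in_streams: "s \<in> streams I \<Longrightarrow> sdrop n s \<in> streams I"
  by (induction n arbitrary: s) (auto dest: streams_stl)

locale contracting_ifs =
  fixes I :: "'i set" and \<theta> :: "'i \<Rightarrow> 'a::euclidean_space \<Rightarrow> 'a" and L :: real
  assumes finite_I: "finite I" and I_not_empty: "I \<noteq> {}"
    and L_nonneg: "0 \<le> L" and L_less_1: "L < 1"
    and contraction: "\<And>k x y. k \<in> I \<Longrightarrow> dist (\<theta> k x) (\<theta> k y) \<le> L * dist x y"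
begin

lemma continuous_on_map: "k \<in> I \<Longrightarrow> continuous_on S (\<theta> k)"
  by (rule lipschitz_on_continuous_on[of L]) (auto intro!: lipschitz_onI contraction L_nonneg)

lemma dist_comp_word_le_power:
  assumes "set \<omega> \<subseteq> I"
  shows "dist (comp_word \<theta> \<omega> x) (comp_word \<theta> \<omega> y) \<le> L ^ length \<omega> * dist x y"
proof -
  have "dist (comp_word \<theta> \<omega> x) (comp_word \<theta> \<omega> y) \<le> prod_word (\<lambda>_. L) \<omega> * dist x y"
    using assms contraction L_nonneg by (intro dist_comp_word_le) auto
  then show ?thesis
    by (simp add: prod_word_const)
qed

definition radius :: real where
  "radius = Max ((\<lambda>k. norm (\<theta> k 0)) ` I) / (1 - L)"

lemma radius_nonneg: "0 \<le> radius"
proof -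
  obtain k where "k \<in> I"
    using I_not_empty by blast
  then have "0 \<le> Max ((\<lambda>k. norm (\<theta> k 0)) ` I)"
    using finite_I by (meson Max_ge finite_imageI imageI norm_ge_zero order_trans)
  then show ?thesis
    using L_less_1 by (simp add: radius_def)
qed

lemma norm_map_le_radius:
  assumes "k \<in> I" "norm x \<le> radius"
  shows "norm (\<theta> k x) \<le> radius"
proof -
  have "norm (\<theta> k x) \<le> dist (\<theta> k x) (\<theta> k 0) + norm (\<theta> k 0)"
    by (metis dist_0_norm dist_commute dist_triangle)
  also have "\<dots> \<le> L * radius + Max ((\<lambda>k. norm (\<theta> k 0)) ` I)"
    using contraction[of k x 0] assms finite_I L_nonneg
    by (intro add_mono) (auto intro: order_trans mult_left_mono)
  also have "\<dots> = radius"
    using L_less_1 by (simp add: radius_def field_simps)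
  finally show ?thesis .
qed

lemma norm_comp_word_le_radius:
  "set \<omega> \<subseteq> I \<Longrightarrow> norm x \<le> radius \<Longrightarrow> norm (comp_word \<theta> \<omega> x) \<le> radius"
  by (induction \<omega>) (auto intro: norm_map_le_radius)

definition coding_map :: "'i stream \<Rightarrow> 'a" where
  "coding_map s = lim (\<lambda>n. comp_word \<theta> (stake n s) 0)"

lemma coding_map_tendsto:
  assumes s: "s \<in> streams I"
  shows "(\<lambda>n. comp_word \<theta> (stake n s) 0) \<longlonglongrightarrow> coding_map s"
proof -
  let ?x = "\<lambda>n. comp_word \<theta> (stake n s) 0"
  have dist_le: "dist (?x n) (?x m) \<le> L ^ n * radius" if "n \<le> m" for n m
  proof -
    have "stake m s = stake n s @ stake (m - n) (sdrop n s)"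
      using that by simp
    then have "dist (?x n) (?x m)
        = dist (comp_word \<theta> (stake n s) 0) (comp_word \<theta> (stake n s) (comp_word \<theta> (stake (m - n) (sdrop n s)) 0))"
      by (simp only: comp_word_append comp_apply)
    also have "\<dots> \<le> L ^ n * dist 0 (comp_word \<theta> (stake (m - n) (sdrop n s)) 0)"
      using dist_comp_word_le_power[OF set_stake_subset[OF s]] by (simp only: length_stake)
    also have "\<dots> \<le> L ^ n * radius"
      using norm_comp_word_le_radius[OF set_stake_subset[OF sdrop_in_streams[OF s]]] radius_nonneg L_nonneg
      by (intro mult_left_mono) (simp_all add: dist_0_norm)
    finally show ?thesis .
  qed
  have "Cauchy ?x"
  proof (rule metric_CauchyI)
    fix e :: real assume "0 < e"
    then obtain M where M: "L ^ M * radius < e"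
      using ex_power_mult_less[OF L_nonneg L_less_1] by blast
    have "dist (?x m) (?x n) < e" if "M \<le> m" "M \<le> n" for m n
    proof -
      have "dist (?x m) (?x n) \<le> L ^ min m n * radius"
        using dist_le[of m n] dist_le[of n m] by (cases "m \<le> n") (auto simp: dist_commute min_def)
      also have "\<dots> \<le> L ^ M * radius"
        using that L_nonneg L_less_1 radius_nonneg by (intro mult_right_mono power_decreasing) auto
      finally show ?thesis
        using M by simp
    qed
    then show "\<exists>M. \<forall>m\<ge>M. \<forall>n\<ge>M. dist (?x m) (?x n) < e"
      by blast
  qed
  then show ?thesis
    unfolding coding_map_def using Cauchy_convergent convergent_LIMSEQ_iff by blast
qed

lemma norm_coding_map_le_radius:
  assumes "s \<in> streams I"
  shows "norm (coding_map s) \<le> radius"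
proof (rule LIMSEQ_le_const2)
  show "(\<lambda>n. norm (comp_word \<theta> (stake n s) 0)) \<longlonglongrightarrow> norm (coding_map s)"
    using coding_map_tendsto[OF assms] by (rule tendsto_norm)
  show "\<exists>N. \<forall>n\<ge>N. norm (comp_word \<theta> (stake n s) 0) \<le> radius"
    using norm_comp_word_le_radius[OF set_stake_subset[OF assms]] radius_nonneg by auto
qed

lemma coding_map_Stream:
  assumes "k \<in> I" "s \<in> streams I"
  shows "coding_map (k ## s) = \<theta> k (coding_map s)"
proof -
  have "(\<lambda>n. comp_word \<theta> (stake (Suc n) (k ## s)) 0) \<longlonglongrightarrow> coding_map (k ## s)"
    using coding_map_tendsto[of "k ## s"] assms by (intro LIMSEQ_Suc) simp
  moreover have "(\<lambda>n. \<theta> k (comp_word \<theta> (stake n s) 0)) \<longlonglongrightarrow> \<theta> k (coding_map s)"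
    using continuous_on_map[OF assms(1), of UNIV] coding_map_tendsto[OF assms(2)]
    by (intro isCont_tendsto_compose[of _ "\<theta> k"]) (simp_all add: continuous_on_eq_continuous_at)
  moreover have "(\<lambda>n. comp_word \<theta> (stake (Suc n) (k ## s)) 0) = (\<lambda>n. \<theta> k (comp_word \<theta> (stake n s) 0))"
    by simp
  ultimately show ?thesis
    using LIMSEQ_unique by metis
qed

lemma coding_map_shift:
  "s \<in> streams I \<Longrightarrow> coding_map s = comp_word \<theta> (stake n s) (coding_map (sdrop n s))"
proof (induction n arbitrary: s)
  case (Suc n)
  have "coding_map s = \<theta> (shd s) (coding_map (stl s))"
    using coding_map_Stream[of "shd s" "stl s"] Suc.prems by (simp add: streams_shd streams_stl)
  then show ?case
    using Suc.IH[OF streams_stl[OF Suc.prems]] by simp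
qed simp

definition attr :: "'a set" where
  "attr = closure (coding_map ` streams I)"

lemma attr_subset_cball: "attr \<subseteq> cball 0 radius"
  unfolding attr_def using norm_coding_map_le_radius
  by (intro closure_minimal) auto

lemma dist_attr_le:
  assumes "x \<in> attr" "y \<in> attr"
  shows "dist x y \<le> 2 * radius"
proof -
  have "norm x \<le> radius" "norm y \<le> radius"
    using assms attr_subset_cball by auto
  then show ?thesis
    using norm_triangle_ineq4[of x y] by (simp add: dist_norm)
qed

lemma compact_attr: "compact attr"
  unfolding attr_def using attr_subset_cball[unfolded attr_def]
  by (meson bounded_cball bounded_subset closure_subset compact_closure)

lemma closed_attr: "closed attr"
  by (simp add: attr_def)

lemma attr_not_empty: "attr \<noteq> {}"
  using I_not_empty sconst_streams[of _ I] by (auto simp: attr_def)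

lemma coding_map_image_invariant: "coding_map ` streams I = (\<Union>k\<in>I. \<theta> k ` coding_map ` streams I)"
proof
  show "coding_map ` streams I \<subseteq> (\<Union>k\<in>I. \<theta> k ` coding_map ` streams I)"
  proof
    fix x assume "x \<in> coding_map ` streams I"
    then obtain s where s: "s \<in> streams I" "x = coding_map s"
      by blast
    then have "x = \<theta> (shd s) (coding_map (stl s))"
      using coding_map_Stream[of "shd s" "stl s"] by (metis stream.collapse streams_shd streams_stl)
    then show "x \<in> (\<Union>k\<in>I. \<theta> k ` coding_map ` streams I)"
      using s(1) by (blast dest: streams_shd streams_stl)
  qed
  show "(\<Union>k\<in>I. \<theta> k ` coding_map ` streams I) \<subseteq> coding_map ` streams I"
    using coding_map_Stream by (force simp: streams_Stream)
qed

lemma map_image_attr_subset: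
  assumes "k \<in> I"
  shows "\<theta> k ` attr \<subseteq> attr"
proof -
  have "\<theta> k ` coding_map ` streams I \<subseteq> (\<Union>k\<in>I. \<theta> k ` coding_map ` streams I)"
    using assms by blast
  also have "\<dots> \<subseteq> closure (coding_map ` streams I)"
    using closure_subset by (simp only: coding_map_image_invariant[symmetric])
  finally show ?thesis
    unfolding attr_def by (rule image_closure_subset[OF continuous_on_map[OF assms] closed_closure])
qed

lemma attr_invariant: "attr = (\<Union>k\<in>I. \<theta> k ` attr)"
proof
  have "closed (\<theta> k ` attr)" if "k \<in> I" for k
    using compact_continuous_image[OF continuous_on_map[OF that] compact_attr] by (rule compact_imp_closed)
  then have "closed (\<Union>k\<in>I. \<theta> k ` attr)"
    using finite_I by (simp add: closed_UN)
  moreover have "coding_map ` streams I \<subseteq> (\<Union>k\<in>I. \<theta> k ` coding_map ` streams I)"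
    using coding_map_image_invariant by (rule equalityD1)
  moreover have "\<dots> \<subseteq> (\<Union>k\<in>I. \<theta> k ` attr)"
    unfolding attr_def by (intro UN_mono image_mono closure_subset order_refl)
  ultimately show "attr \<subseteq> (\<Union>k\<in>I. \<theta> k ` attr)"
    unfolding attr_def by (meson closure_minimal order_trans)
  show "(\<Union>k\<in>I. \<theta> k ` attr) \<subseteq> attr"
    using map_image_attr_subset by blast
qed

lemma comp_word_image_attr_subset: "set \<omega> \<subseteq> I \<Longrightarrow> comp_word \<theta> \<omega> ` attr \<subseteq> attr"
  by (rule comp_word_image_subset[OF map_image_attr_subset])

lemma attr_subset_of_invariant:
  assumes "closed K" "K \<noteq> {}" "\<And>k. k \<in> I \<Longrightarrow> \<theta> k ` K \<subseteq> K"
  shows "attr \<subseteq> K"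
proof -
  obtain b where b: "b \<in> K"
    using assms(2) by blast
  have "coding_map s \<in> closure K" if s: "s \<in> streams I" for s
    unfolding closure_approachable
  proof (intro allI impI)
    fix e :: real assume "0 < e"
    then obtain n where n: "L ^ n * (radius + norm b) < e"
      using ex_power_mult_less[OF L_nonneg L_less_1] by blast
    have \<omega>: "set (stake n s) \<subseteq> I"
      using set_stake_subset[OF s] .
    have "dist (comp_word \<theta> (stake n s) b) (coding_map s)
        \<le> L ^ n * dist b (coding_map (sdrop n s))"
      by (subst coding_map_shift[OF s, of n]) (metis dist_comp_word_le_power[OF \<omega>] length_stake)
    also have "\<dots> \<le> L ^ n * (radius + norm b)"
      using norm_coding_map_le_radius[OF sdrop_in_streams[OF s, where n=n]] L_nonneg
        norm_triangle_ineq4[of b "coding_map (sdrop n s)"]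
      by (intro mult_left_mono) (auto simp: dist_norm)
    finally show "\<exists>y\<in>K. dist y (coding_map s) < e"
      using comp_word_image_subset[OF assms(3) \<omega>] b n by force
  qed
  then show ?thesis
    unfolding attr_def using assms(1) by (intro closure_minimal) auto
qed

lemma attr_eq_comp_word_images: "attr = (\<Union>\<omega>\<in>lists_of I n. comp_word \<theta> \<omega> ` attr)"
  using attr_invariant by (rule invariant_eq_comp_word_images)

lemma attr_unique:
  assumes "compact B" "B \<noteq> {}" "B = (\<Union>k\<in>I. \<theta> k ` B)"
  shows "B = attr"
proof
  have "\<theta> k ` B \<subseteq> B" if "k \<in> I" for k
  proof -
    have "\<theta> k ` B \<subseteq> (\<Union>k\<in>I. \<theta> k ` B)"
      using that by blast
    also have "\<dots> = B"
      by (rule assms(3)[symmetric])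
    finally show ?thesis .
  qed
  then show "attr \<subseteq> B"
    using assms(1,2) by (intro attr_subset_of_invariant compact_imp_closed)
  obtain b where b: "\<forall>x\<in>B. norm x \<le> b"
    using compact_imp_bounded[OF assms(1)] bounded_iff by blast
  obtain k0 where k0: "k0 \<in> I"
    using I_not_empty by blast
  have "x \<in> closure attr" if x: "x \<in> B" for x
    unfolding closure_approachable
  proof (intro allI impI)
    fix e :: real assume "0 < e"
    then obtain n where n: "L ^ n * (b + radius) < e"
      using ex_power_mult_less[OF L_nonneg L_less_1] by blast
    have "x \<in> (\<Union>\<omega>\<in>lists_of I n. comp_word \<theta> \<omega> ` B)"
      using equalityD1[OF invariant_eq_comp_word_images[OF assms(3)]] x by (rule subsetD)
    then obtain \<omega> y where \<omega>: "\<omega> \<in> lists_of I n" "y \<in> B" "x = comp_word \<theta> \<omega> y"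
      by blast
    have \<omega>_set: "set \<omega> \<subseteq> I" and \<omega>_len: "length \<omega> = n"
      using \<omega>(1) by (auto simp: lists_of_def)
    define s where "s = \<omega> @- sconst k0"
    have s: "s \<in> streams I"
      unfolding s_def using \<omega>_set k0 by (intro shift_streams sconst_streams) (simp_all add: lists_eq_set)
    have "stake n s = \<omega>" "sdrop n s = sconst k0"
      unfolding s_def using \<omega>_len by (simp_all add: stake_shift sdrop_shift)
    then have "coding_map s = comp_word \<theta> \<omega> (coding_map (sconst k0))"
      using coding_map_shift[OF s, of n] by (simp only:)
    then have "dist (coding_map s) x = dist (comp_word \<theta> \<omega> (coding_map (sconst k0))) (comp_word \<theta> \<omega> y)"
      using \<omega>(3) by (simp only:)
    also have "\<dots> \<le> L ^ n * dist (coding_map (sconst k0)) y"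
      using dist_comp_word_le_power[OF \<omega>_set] unfolding \<omega>_len .
    also have "\<dots> \<le> L ^ n * (b + radius)"
    proof (rule mult_left_mono[OF _ zero_le_power[OF L_nonneg]])
      have "norm y \<le> b"
        using b \<omega>(2) by blast
      then show "dist (coding_map (sconst k0)) y \<le> b + radius"
        using norm_coding_map_le_radius[OF sconst_streams[OF k0]]
          norm_triangle_ineq4[of "coding_map (sconst k0)" y]
        unfolding dist_norm by linarith
    qed
    finally have "dist (coding_map s) x < e"
      using n by linarith
    moreover have "coding_map s \<in> attr"
      unfolding attr_def using s by (intro closure_subset[THEN subsetD] imageI)
    ultimately show "\<exists>y\<in>attr. dist y x < e"
      by blast
  qed
  then show "B \<subseteq> attr"
    using closed_attr by auto
qed

lemma attractor_eq_attr: "attractor I \<theta> = attr"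
  unfolding attractor_def
proof (rule the_equality)
  show "compact attr \<and> attr \<noteq> {} \<and> attr = (\<Union>k\<in>I. \<theta> k ` attr)"
    using compact_attr attr_not_empty attr_invariant by blast
  show "B = attr" if "compact B \<and> B \<noteq> {} \<and> B = (\<Union>k\<in>I. \<theta> k ` B)" for B
    using that by (elim conjE) (rule attr_unique)
qed

lemma attr_comp_word_cases:
  assumes "x \<in> attr"
  obtains \<omega> y where "\<omega> \<in> lists_of I n" "y \<in> attr" "x = comp_word \<theta> \<omega> y"
proof -
  have "x \<in> (\<Union>\<omega>\<in>lists_of I n. comp_word \<theta> \<omega> ` attr)"
    using assms by (subst (asm) attr_eq_comp_word_images[of n])
  then show ?thesis
    using that by blast
qed

lemma ex_comp_word_image_attr_subset:
  assumes "open U" "U \<inter> attr \<noteq> {}"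
  obtains \<sigma> where "set \<sigma> \<subseteq> I" "comp_word \<theta> \<sigma> ` attr \<subseteq> U"
proof -
  obtain x where x: "x \<in> U" "x \<in> attr"
    using assms(2) by blast
  obtain e where "0 < e" "ball x e \<subseteq> U"
    using assms(1) x(1) open_contains_ball by blast
  obtain k where k: "L ^ k * (2 * radius) < e"
    using ex_power_mult_less[OF L_nonneg L_less_1 \<open>0 < e\<close>] by blast
  obtain \<sigma> y where \<sigma>: "\<sigma> \<in> lists_of I k" "y \<in> attr" "x = comp_word \<theta> \<sigma> y"
    using attr_comp_word_cases[OF x(2)] by blast
  then have \<sigma>_set: "set \<sigma> \<subseteq> I" and \<sigma>_len: "length \<sigma> = k"
    by (auto simp: lists_of_def)
  have "comp_word \<theta> \<sigma> z \<in> ball x e" if z: "z \<in> attr" for z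
  proof -
    have "dist x (comp_word \<theta> \<sigma> z) \<le> L ^ k * dist y z"
      using dist_comp_word_le_power[OF \<sigma>_set] unfolding \<sigma>(3) \<sigma>_len .
    also have "\<dots> \<le> L ^ k * (2 * radius)"
      using dist_attr_le[OF \<sigma>(2) z] L_nonneg by (intro mult_left_mono) simp_all
    finally have "dist x (comp_word \<theta> \<sigma> z) < e"
      using k by linarith
    then show ?thesis
      by simp
  qed
  then show ?thesis
    using that[OF \<sigma>_set] \<open>ball x e \<subseteq> U\<close> by blast
qed

end

lemma contracting_ifs_Max:
  fixes \<theta> :: "'i \<Rightarrow> 'a::euclidean_space \<Rightarrow> 'a"
  assumes "finite I" "I \<noteq> {}" "\<And>k. k \<in> I \<Longrightarrow> 0 \<le> c k \<and> c k < 1"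
    and "\<And>k x y. k \<in> I \<Longrightarrow> dist (\<theta> k x) (\<theta> k y) \<le> c k * dist x y"
  shows "contracting_ifs I \<theta> (Max (c ` I))"
proof (rule contracting_ifs.intro)
  have c_le: "c k \<le> Max (c ` I)" if "k \<in> I" for k
    by (rule Max_ge[OF finite_imageI[OF assms(1)] imageI[OF that]])
  have "Max (c ` I) \<in> c ` I"
    using assms(1,2) by (intro Max_in) simp_all
  then obtain k where k: "k \<in> I" "Max (c ` I) = c k"
    by blast
  then show "0 \<le> Max (c ` I)" "Max (c ` I) < 1"
    using assms(3)[OF k(1)] by simp_all
  show "dist (\<theta> k x) (\<theta> k y) \<le> Max (c ` I) * dist x y" if "k \<in> I" for k x y
    using assms(4)[OF that] mult_right_mono[OF c_le[OF that] zero_le_dist] by (rule order_trans)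
qed (fact assms(1,2))+

definition quant_integral :: "real \<Rightarrow> 'a::real_normed_vector measure \<Rightarrow> 'a set \<Rightarrow> ennreal" where
  "quant_integral r \<nu> \<alpha> = (\<integral>\<^sup>+x. ennreal (Min ((\<lambda>a. norm (x - a) powr r) ` \<alpha>)) \<partial>\<nu>)"

lemma quant_error_eq_INF_quant_integral:
  "quant_error n r \<nu> = (INF \<alpha>\<in>{\<alpha>. finite \<alpha> \<and> \<alpha> \<noteq> {} \<and> card \<alpha> \<le> n}. quant_integral r \<nu> \<alpha>)"
  by (simp add: quant_error_def quant_integral_def)

lemma quant_error_le_quant_integral:
  "finite \<alpha> \<Longrightarrow> \<alpha> \<noteq> {} \<Longrightarrow> card \<alpha> \<le> n \<Longrightarrow> quant_error n r \<nu> \<le> quant_integral r \<nu> \<alpha>"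
  unfolding quant_error_eq_INF_quant_integral by (rule INF_lower) simp

lemma borel_measurable_Min_dist_powr [measurable]:
  fixes \<alpha> :: "'a::euclidean_space set"
  assumes "finite \<alpha>"
  shows "(\<lambda>x. ennreal (Min ((\<lambda>a. norm (x - a) powr r) ` \<alpha>))) \<in> borel_measurable borel"
proof -
  have "(\<lambda>x. Min ((\<lambda>a. norm (x - a) powr r) ` \<alpha>)) \<in> borel_measurable borel"
    using assms by (intro borel_measurable_Min) auto
  then show ?thesis
    by measurable
qed

lemma Min_dist_powr_nearest:
  fixes x :: "'a::real_normed_vector"
  assumes "finite \<alpha>" "\<alpha> \<noteq> {}" "0 < r"
  obtains a where "a \<in> \<alpha>" "\<And>b. b \<in> \<alpha> \<Longrightarrow> norm (x - a) \<le> norm (x - b)"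
    and "Min ((\<lambda>a. norm (x - a) powr r) ` \<alpha>) = norm (x - a) powr r"
proof -
  obtain a where "is_arg_min (\<lambda>b. norm (x - b)) (\<lambda>b. b \<in> \<alpha>) a"
    using ex_is_arg_min_if_finite[OF assms(1,2)] by blast
  then have a: "a \<in> \<alpha>" and nearest: "\<And>b. b \<in> \<alpha> \<Longrightarrow> norm (x - a) \<le> norm (x - b)"
    by (simp_all add: is_arg_min_linorder)
  have "Min ((\<lambda>a. norm (x - a) powr r) ` \<alpha>) = norm (x - a) powr r"
  proof (rule Min_eqI)
    show "finite ((\<lambda>a. norm (x - a) powr r) ` \<alpha>)"
      using assms(1) by simp
    show "norm (x - a) powr r \<in> (\<lambda>a. norm (x - a) powr r) ` \<alpha>"
      using a by (rule imageI)
    show "norm (x - a) powr r \<le> y" if "y \<in> (\<lambda>a. norm (x - a) powr r) ` \<alpha>" for y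
      using that nearest assms(3) by (auto intro: powr_mono2)
  qed
  with a nearest show ?thesis
    by (rule that)
qed

lemma surj_of_dist_ge:
  fixes g :: "'a::euclidean_space \<Rightarrow> 'a"
  assumes cont: "continuous_on UNIV g" and "0 < s" and ge: "\<And>x y. s * dist x y \<le> dist (g x) (g y)"
  shows "surj g"
proof -
  have inj: "inj g"
  proof (rule injI)
    fix x y assume "g x = g y"
    then show "x = y"
      using ge[of x y] \<open>0 < s\<close> by (simp add: mult_le_0_iff)
  qed
  have "open (range g)"
    using cont inj by (intro invariance_of_domain) (auto intro: inj_on_subset)
  moreover have "closed (range g)"
    unfolding closed_sequential_limits
  proof (intro allI impI, elim conjE)
    fix y l assume y: "\<forall>n. y n \<in> range g" and lim: "y \<longlonglongrightarrow> l"
    define x where "x n = inv g (y n)" for n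
    have gx: "g (x n) = y n" for n
      using y by (auto simp: x_def f_inv_into_f)
    have "Cauchy x"
    proof (rule metric_CauchyI)
      fix e :: real assume "0 < e"
      then obtain M where M: "\<forall>m\<ge>M. \<forall>n\<ge>M. dist (y m) (y n) < s * e"
        using LIMSEQ_imp_Cauchy[OF lim] \<open>0 < s\<close> unfolding Cauchy_def by (meson mult_pos_pos)
      have "dist (x m) (x n) < e" if "M \<le> m" "M \<le> n" for m n
      proof -
        have "s * dist (x m) (x n) \<le> dist (y m) (y n)"
          using ge[of "x m" "x n"] by (simp add: gx)
        also have "\<dots> < s * e"
          using M that by blast
        finally show ?thesis
          using \<open>0 < s\<close> by simp
      qed
      then show "\<exists>M. \<forall>m\<ge>M. \<forall>n\<ge>M. dist (x m) (x n) < e"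
        by blast
    qed
    then obtain x0 where "x \<longlonglongrightarrow> x0"
      using Cauchy_convergent convergent_def by blast
    then have "y \<longlonglongrightarrow> g x0"
      using cont unfolding gx[symmetric]
      by (intro isCont_tendsto_compose[of _ g]) (simp_all add: continuous_on_eq_continuous_at)
    then show "l \<in> range g"
      using lim LIMSEQ_unique by blast
  qed
  ultimately have "range g = UNIV"
    using clopen by blast
  then show ?thesis .
qed

lemma closed_eq_Inter_infdist_less:
  fixes F :: "'a::metric_space set"
  assumes "closed F" "F \<noteq> {}"
  shows "F = (\<Inter>i. {x. infdist x F < inverse (real (Suc i))})"
proof
  show "F \<subseteq> (\<Inter>i. {x. infdist x F < inverse (real (Suc i))})"
    using assms by (auto simp: in_closed_iff_infdist_zero)
  show "(\<Inter>i. {x. infdist x F < inverse (real (Suc i))}) \<subseteq> F"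
  proof
    fix x assume x: "x \<in> (\<Inter>i. {x. infdist x F < inverse (real (Suc i))})"
    have "infdist x F \<le> 0"
    proof (rule field_le_epsilon)
      fix e :: real assume "0 < e"
      then obtain i where "inverse (real (Suc i)) < e"
        using reals_Archimedean by blast
      moreover have "infdist x F < inverse (real (Suc i))"
        using x by blast
      ultimately show "infdist x F \<le> 0 + e"
        by linarith
    qed
    then show "x \<in> F"
      using assms infdist_nonneg[of x F] by (simp add: in_closed_iff_infdist_zero)
  qed
qed

lemma tendsto_measure_infdist_less:
  fixes F :: "'a::metric_space set"
  assumes "finite_measure M" "sets M = sets borel" "closed F" "F \<noteq> {}"
  shows "(\<lambda>i. measure M {x. infdist x F < inverse (real (Suc i))}) \<longlonglongrightarrow> measure M F"
proof -
  interpret finite_measure M by (fact assms(1))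
  have "open {x. infdist x F < e}" for e
    by (intro open_Collect_less continuous_intros)
  then have "{x. infdist x F < e} \<in> sets M" for e
    using assms(2) by simp
  moreover have "decseq (\<lambda>i. {x. infdist x F < inverse (real (Suc i))})"
  proof (rule decseq_SucI, rule subsetI)
    fix i x assume "x \<in> {x. infdist x F < inverse (real (Suc (Suc i)))}"
    then have "infdist x F < inverse (real (Suc (Suc i)))"
      by simp
    also have "\<dots> \<le> inverse (real (Suc i))"
      by (simp add: field_simps)
    finally show "x \<in> {x. infdist x F < inverse (real (Suc i))}"
      by simp
  qed
  ultimately have "(\<lambda>i. measure M {x. infdist x F < inverse (real (Suc i))})
      \<longlonglongrightarrow> measure M (\<Inter>i. {x. infdist x F < inverse (real (Suc i))})"
    by (intro finite_Lim_measure_decseq) auto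
  then show ?thesis
    by (simp only: closed_eq_Inter_infdist_less[OF assms(3,4), symmetric])
qed

locale weighted_ifs = contracting_ifs I \<theta> L
  for I :: "'i::countable set" and \<theta> :: "'i \<Rightarrow> 'a::euclidean_space \<Rightarrow> 'a" and L +
  fixes w :: "'i \<Rightarrow> real"
  assumes weight_pos: "\<And>k. k \<in> I \<Longrightarrow> 0 < w k" and weight_sum: "sum w I = 1"
begin

lemma measurable_map [measurable]: "k \<in> I \<Longrightarrow> \<theta> k \<in> borel_measurable borel"
  by (rule borel_measurable_continuous_onI[OF continuous_on_map])

lemma vimage_map_borel: "k \<in> I \<Longrightarrow> B \<in> sets borel \<Longrightarrow> \<theta> k -` B \<in> sets borel"
  using measurable_sets[OF measurable_map] by simp

lemma vimage_comp_word_borel: "set \<omega> \<subseteq> I \<Longrightarrow> B \<in> sets borel \<Longrightarrow> comp_word \<theta> \<omega> -` B \<in> sets borel"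
  by (induction \<omega> arbitrary: B) (auto simp: vimage_comp[symmetric] intro: vimage_map_borel)

lemma sum_prod_word_weight: "(\<Sum>\<omega>\<in>lists_of I n. prod_word w \<omega>) = 1"
  using sum_prod_word_lists_of[OF finite_I] weight_sum by simp

lemma prod_word_weight_pos: "\<omega> \<in> lists_of I n \<Longrightarrow> 0 < prod_word w \<omega>"
  by (intro prod_word_pos weight_pos) (auto simp: lists_of_def)

definition weight_pmf :: "'i pmf" where
  "weight_pmf = embed_pmf (\<lambda>k. if k \<in> I then w k else 0)"

lemma pmf_weight_pmf: "pmf weight_pmf k = (if k \<in> I then w k else 0)"
proof -
  have "(\<integral>\<^sup>+k. ennreal (if k \<in> I then w k else 0) \<partial>count_space UNIV)
      = (\<integral>\<^sup>+k. ennreal (w k) * indicator I k \<partial>count_space UNIV)"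
    by (intro nn_integral_cong) (simp add: indicator_def)
  also have "\<dots> = (\<Sum>k\<in>I. ennreal (w k))"
    using finite_I by (simp add: nn_integral_count_space_indicator[symmetric] nn_integral_count_space_finite)
  also have "\<dots> = 1"
    using weight_pos weight_sum by (subst sum_ennreal) (auto intro: less_imp_le)
  finally show ?thesis
    unfolding weight_pmf_def using weight_pos by (intro pmf_embed_pmf) (auto intro: less_imp_le)
qed

lemma set_weight_pmf: "set_pmf weight_pmf \<subseteq> I"
  by (auto simp: set_pmf_eq pmf_weight_pmf)

abbreviation coding_space :: "'i stream measure" where
  "coding_space \<equiv> stream_space (measure_pmf weight_pmf)"

lemma AE_coding_space_streams: "AE s in coding_space. s \<in> streams I"
proof -
  have "AE s in coding_space. stream_all (\<lambda>k. k \<in> I) s"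
    using set_weight_pmf
    by (intro prob_space.AE_stream_all prob_space_measure_pmf) (auto simp: AE_measure_pmf_iff)
  then show ?thesis
    by (simp add: streams_iff_sset subset_eq)
qed

lemma measurable_coding_map [measurable]: "coding_map \<in> borel_measurable coding_space"
proof -
  have "stake n \<in> measurable coding_space (count_space UNIV)" for n
    using measurable_stake[of n]
    by (simp add: measurable_cong_sets sets_stream_space_cong sets_measure_pmf_count_space)
  then have "(\<lambda>s. comp_word \<theta> (stake n s) 0) \<in> borel_measurable coding_space" for n
    using measurable_comp[of "stake n" _ _ "\<lambda>\<omega>. comp_word \<theta> \<omega> 0"] by (simp add: o_def)
  then show ?thesis
    unfolding coding_map_def[abs_def] by measurable
qed

definition mu :: "'a measure" where
  "mu = distr coding_space borel coding_map"

lemma prob_space_mu: "prob_space mu"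
  unfolding mu_def
  by (intro prob_space.prob_space_distr prob_space.prob_space_stream_space prob_space_measure_pmf)
    measurable

lemma sets_mu [simp, measurable_cong]: "sets mu = sets borel"
  by (simp add: mu_def)

lemma nn_integral_mu:
  assumes [measurable]: "f \<in> borel_measurable borel"
  shows "(\<integral>\<^sup>+x. f x \<partial>mu) = (\<Sum>k\<in>I. ennreal (w k) * (\<integral>\<^sup>+x. f (\<theta> k x) \<partial>mu))"
proof -
  have inner: "(\<integral>\<^sup>+s. f (coding_map (k ## s)) \<partial>coding_space) = (\<integral>\<^sup>+x. f (\<theta> k x) \<partial>mu)"
    if k: "k \<in> I" for k
  proof -
    have "(\<integral>\<^sup>+s. f (coding_map (k ## s)) \<partial>coding_space) = (\<integral>\<^sup>+s. f (\<theta> k (coding_map s)) \<partial>coding_space)"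
      using AE_coding_space_streams
      by (intro nn_integral_cong_AE) (auto elim!: eventually_mono simp: coding_map_Stream[OF k])
    also have "\<dots> = (\<integral>\<^sup>+x. f (\<theta> k x) \<partial>mu)"
      unfolding mu_def using k by (subst nn_integral_distr) auto
    finally show ?thesis .
  qed
  have "(\<integral>\<^sup>+x. f x \<partial>mu) = (\<integral>\<^sup>+s. f (coding_map s) \<partial>coding_space)"
    unfolding mu_def by (simp add: nn_integral_distr)
  also have "\<dots> = (\<integral>\<^sup>+k. (\<integral>\<^sup>+s. f (coding_map (k ## s)) \<partial>coding_space) \<partial>measure_pmf weight_pmf)"
    by (intro prob_space.nn_integral_stream_space prob_space_measure_pmf) measurable
  also have "\<dots> = (\<integral>\<^sup>+k. (\<integral>\<^sup>+x. f (\<theta> k x) \<partial>mu) \<partial>measure_pmf weight_pmf)"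
    using inner set_weight_pmf by (intro nn_integral_cong_AE) (auto simp: AE_measure_pmf_iff)
  also have "\<dots> = (\<Sum>k\<in>I. (\<integral>\<^sup>+x. f (\<theta> k x) \<partial>mu) * pmf weight_pmf k)"
    using set_weight_pmf finite_I by (intro nn_integral_measure_pmf_support) auto
  also have "\<dots> = (\<Sum>k\<in>I. ennreal (w k) * (\<integral>\<^sup>+x. f (\<theta> k x) \<partial>mu))"
    by (intro sum.cong) (auto simp: pmf_weight_pmf mult.commute)
  finally show ?thesis .
qed

definition invariant_prob :: "'a measure \<Rightarrow> bool" where
  "invariant_prob \<nu> \<longleftrightarrow> prob_space \<nu> \<and> sets \<nu> = sets borel \<and>
     (\<forall>B\<in>sets borel. emeasure \<nu> B = (\<Sum>k\<in>I. ennreal (w k) * emeasure \<nu> (\<theta> k -` B)))"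

lemma invariant_prob_mu: "invariant_prob mu"
  unfolding invariant_prob_def
proof (intro conjI ballI prob_space_mu sets_mu)
  fix B :: "'a set" assume [measurable]: "B \<in> sets borel"
  have "emeasure mu B = (\<integral>\<^sup>+x. indicator B x \<partial>mu)"
    by simp
  also have "\<dots> = (\<Sum>k\<in>I. ennreal (w k) * (\<integral>\<^sup>+x. indicator B (\<theta> k x) \<partial>mu))"
    by (rule nn_integral_mu) simp
  also have "\<dots> = (\<Sum>k\<in>I. ennreal (w k) * emeasure mu (\<theta> k -` B))"
  proof (intro sum.cong refl arg_cong2[where f = "(*)"])
    fix k assume "k \<in> I"
    then have "\<theta> k -` B \<in> sets mu"
      by (simp add: vimage_map_borel)
    have "(\<integral>\<^sup>+x. indicator B (\<theta> k x) \<partial>mu) = (\<integral>\<^sup>+x. indicator (\<theta> k -` B) x \<partial>mu)"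
      by (simp add: indicator_def)
    also have "\<dots> = emeasure mu (\<theta> k -` B)"
      using \<open>\<theta> k -` B \<in> sets mu\<close> by (rule nn_integral_indicator)
    finally show "(\<integral>\<^sup>+x. indicator B (\<theta> k x) \<partial>mu) = emeasure mu (\<theta> k -` B)" .
  qed
  finally show "emeasure mu B = (\<Sum>k\<in>I. ennreal (w k) * emeasure mu (\<theta> k -` B))" .
qed

lemma invariant_probD:
  assumes "invariant_prob \<nu>"
  shows "prob_space \<nu>" and "sets \<nu> = sets borel"
  using assms by (simp_all add: invariant_prob_def)

lemma measure_invariant_prob_iterate:
  assumes \<nu>: "invariant_prob \<nu>"
  shows "B \<in> sets borel \<Longrightarrow>
    measure \<nu> B = (\<Sum>\<omega>\<in>lists_of I n. prod_word w \<omega> * measure \<nu> (comp_word \<theta> \<omega> -` B))"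
proof (induction n arbitrary: B)
  case (Suc n)
  interpret prob_space \<nu>
    using invariant_probD[OF \<nu>] by simp
  have nonneg: "0 \<le> w k" if "k \<in> I" for k
    using weight_pos[OF that] by simp
  have "ennreal (measure \<nu> B) = (\<Sum>k\<in>I. ennreal (w k) * emeasure \<nu> (\<theta> k -` B))"
    using \<nu> Suc.prems by (simp add: invariant_prob_def emeasure_eq_measure)
  also have "\<dots> = (\<Sum>k\<in>I. ennreal (w k * measure \<nu> (\<theta> k -` B)))"
    using nonneg by (intro sum.cong) (simp_all add: emeasure_eq_measure ennreal_mult)
  also have "\<dots> = ennreal (\<Sum>k\<in>I. w k * measure \<nu> (\<theta> k -` B))"
    using nonneg by (intro sum_ennreal) simp
  finally have "measure \<nu> B = (\<Sum>k\<in>I. w k * measure \<nu> (\<theta> k -` B))"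
    using nonneg by (subst (asm) ennreal_inj) (auto intro!: sum_nonneg)
  also have "\<dots> = (\<Sum>k\<in>I. w k * (\<Sum>\<omega>\<in>lists_of I n. prod_word w \<omega> * measure \<nu> (comp_word \<theta> \<omega> -` \<theta> k -` B)))"
  proof (rule sum.cong[OF refl])
    fix k assume "k \<in> I"
    then have "\<theta> k -` B \<in> sets borel"
      using vimage_map_borel Suc.prems by blast
    then show "w k * measure \<nu> (\<theta> k -` B)
        = w k * (\<Sum>\<omega>\<in>lists_of I n. prod_word w \<omega> * measure \<nu> (comp_word \<theta> \<omega> -` \<theta> k -` B))"
      by (simp only: Suc.IH)
  qed
  also have "\<dots> = (\<Sum>\<omega>\<in>lists_of I (Suc n). prod_word w \<omega> * measure \<nu> (comp_word \<theta> \<omega> -` B))"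
    by (simp add: sum_lists_of_Suc[OF finite_I] sum_distrib_left mult.assoc vimage_comp)
  finally show ?case .
qed simp

lemma measure_invariant_prob_cball_le:
  assumes \<nu>: "invariant_prob \<nu>" and "0 < e"
  shows "measure \<nu> (cball 0 r) \<le> measure \<nu> {x. infdist x attr < e}"
proof -
  interpret prob_space \<nu>
    using invariant_probD[OF \<nu>] by simp
  have U: "{x. infdist x attr < e} \<in> sets borel"
    by (intro borel_open open_Collect_less continuous_intros)
  obtain a where a: "a \<in> attr"
    using attr_not_empty by blast
  obtain n where n: "L ^ n * (r + radius) < e"
    using ex_power_mult_less[OF L_nonneg L_less_1 \<open>0 < e\<close>] by blast
  have sub: "cball 0 r \<subseteq> comp_word \<theta> \<omega> -` {x. infdist x attr < e}" if \<omega>: "\<omega> \<in> lists_of I n" for \<omega>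
  proof
    fix y :: 'a assume y: "y \<in> cball 0 r"
    have \<omega>_set: "set \<omega> \<subseteq> I" and \<omega>_len: "length \<omega> = n"
      using \<omega> by (auto simp: lists_of_def)
    have "comp_word \<theta> \<omega> a \<in> attr"
      using comp_word_image_attr_subset[OF \<omega>_set] a by blast
    then have "infdist (comp_word \<theta> \<omega> y) attr \<le> dist (comp_word \<theta> \<omega> y) (comp_word \<theta> \<omega> a)"
      by (rule infdist_le)
    also have "\<dots> \<le> L ^ n * dist y a"
      using dist_comp_word_le_power[OF \<omega>_set] unfolding \<omega>_len .
    also have "\<dots> \<le> L ^ n * (r + radius)"
    proof (rule mult_left_mono[OF _ zero_le_power[OF L_nonneg]])
      show "dist y a \<le> r + radius"
        using y attr_subset_cball a norm_triangle_ineq4[of y a] by (auto simp: dist_norm)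
    qed
    finally have "infdist (comp_word \<theta> \<omega> y) attr < e"
      using n by linarith
    then show "y \<in> comp_word \<theta> \<omega> -` {x. infdist x attr < e}"
      by simp
  qed
  have "measure \<nu> (cball 0 r) = (\<Sum>\<omega>\<in>lists_of I n. prod_word w \<omega> * measure \<nu> (cball 0 r))"
    by (simp add: sum_distrib_right[symmetric] sum_prod_word_weight)
  also have "\<dots> \<le> (\<Sum>\<omega>\<in>lists_of I n. prod_word w \<omega> * measure \<nu> (comp_word \<theta> \<omega> -` {x. infdist x attr < e}))"
  proof (intro sum_mono mult_left_mono)
    fix \<omega> assume \<omega>: "\<omega> \<in> lists_of I n"
    then have "comp_word \<theta> \<omega> -` {x. infdist x attr < e} \<in> events"
      using invariant_probD(2)[OF \<nu>] vimage_comp_word_borel[OF _ U] by (simp add: lists_of_def)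
    then show "measure \<nu> (cball 0 r) \<le> measure \<nu> (comp_word \<theta> \<omega> -` {x. infdist x attr < e})"
      by (rule finite_measure_mono[OF sub[OF \<omega>]])
    show "0 \<le> prod_word w \<omega>"
      using prod_word_weight_pos[OF \<omega>] by simp
  qed
  also have "\<dots> = measure \<nu> {x. infdist x attr < e}"
    by (rule measure_invariant_prob_iterate[OF \<nu> U, symmetric])
  finally show ?thesis .
qed

lemma measure_invariant_prob_infdist_less:
  assumes \<nu>: "invariant_prob \<nu>" and "0 < e"
  shows "measure \<nu> {x. infdist x attr < e} = 1"
proof -
  interpret prob_space \<nu>
    using invariant_probD[OF \<nu>] by simp
  have space: "space \<nu> = UNIV"
    using sets_eq_imp_space_eq[OF invariant_probD(2)[OF \<nu>]] by simp
  have "cball (0::'a) (real j) \<in> events" for j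
    using invariant_probD(2)[OF \<nu>] by (simp add: borel_closed)
  then have "range (\<lambda>j. cball (0::'a) (real j)) \<subseteq> events"
    by blast
  moreover have "incseq (\<lambda>j. cball (0::'a) (real j))"
    by (rule incseq_SucI) (simp add: subset_cball)
  ultimately have "(\<lambda>j. measure \<nu> (cball 0 (real j))) \<longlonglongrightarrow> measure \<nu> (\<Union>j. cball 0 (real j))"
    by (rule finite_Lim_measure_incseq)
  moreover have "(\<Union>j. cball (0::'a) (real j)) = space \<nu>"
  proof -
    have "x \<in> (\<Union>j. cball 0 (real j))" for x :: 'a
    proof -
      obtain j where "norm x \<le> real j"
        using real_arch_simple by blast
      then show ?thesis
        by (intro UN_I[of j]) auto
    qed
    then show ?thesis
      using space by blast
  qed
  ultimately have "(\<lambda>j. measure \<nu> (cball 0 (real j))) \<longlonglongrightarrow> 1"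
    by (simp add: prob_space)
  then have "1 \<le> measure \<nu> {x. infdist x attr < e}"
    using measure_invariant_prob_cball_le[OF \<nu> \<open>0 < e\<close>] by (intro LIMSEQ_le_const2) auto
  then show ?thesis
    using prob_le_1 by (intro antisym) auto
qed

lemma measure_invariant_prob_attr:
  assumes \<nu>: "invariant_prob \<nu>"
  shows "measure \<nu> attr = 1"
proof -
  interpret prob_space \<nu>
    using invariant_probD[OF \<nu>] by simp
  have "(\<lambda>i. measure \<nu> {x. infdist x attr < inverse (real (Suc i))}) \<longlonglongrightarrow> measure \<nu> attr"
    using invariant_probD(2)[OF \<nu>] closed_attr attr_not_empty
    by (intro tendsto_measure_infdist_less finite_measure_axioms)
  moreover have "(\<lambda>i. measure \<nu> {x. infdist x attr < inverse (real (Suc i))}) = (\<lambda>i. 1)"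
    using measure_invariant_prob_infdist_less[OF \<nu>] by simp
  ultimately show ?thesis
    using LIMSEQ_unique tendsto_const by metis
qed

lemma AE_mu_attr: "AE x in mu. x \<in> attr"
  by (rule prob_space.AE_prob_1[OF prob_space_mu measure_invariant_prob_attr[OF invariant_prob_mu]])

text \<open>Each cylinder image either misses F (and then carries no mass, the invariant measure
  living on the attractor) or comes close to F at every point of the attractor.\<close>

lemma measure_invariant_prob_closed_le:
  assumes \<nu>1: "invariant_prob \<nu>1" and \<nu>2: "invariant_prob \<nu>2" and F: "closed F" "F \<noteq> {}"
    and "0 < d"
  shows "measure \<nu>1 F \<le> measure \<nu>2 {x. infdist x F < d}"
proof -
  interpret N1: prob_space \<nu>1
    using invariant_probD[OF \<nu>1] by simp
  interpret N2: prob_space \<nu>2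
    using invariant_probD[OF \<nu>2] by simp
  define U where "U = {x. infdist x F < d}"
  have F_borel: "F \<in> sets borel" and U_borel: "U \<in> sets borel"
    unfolding U_def using F(1) by (simp_all add: borel_closed borel_open open_Collect_less continuous_on_infdist
        continuous_on_id)
  obtain n where n: "L ^ n * (2 * radius) < d"
    using ex_power_mult_less[OF L_nonneg L_less_1 \<open>0 < d\<close>] by blast
  have le: "measure \<nu>1 (comp_word \<theta> \<omega> -` F) \<le> measure \<nu>2 (comp_word \<theta> \<omega> -` U)"
    if \<omega>: "\<omega> \<in> lists_of I n" for \<omega>
  proof -
    have \<omega>_set: "set \<omega> \<subseteq> I" and \<omega>_len: "length \<omega> = n"
      using \<omega> by (auto simp: lists_of_def)
    have sets1: "comp_word \<theta> \<omega> -` F \<in> N1.events" and sets2: "comp_word \<theta> \<omega> -` U \<in> N2.events"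
      using vimage_comp_word_borel[OF \<omega>_set] F_borel U_borel
        invariant_probD(2)[OF \<nu>1] invariant_probD(2)[OF \<nu>2] by simp_all
    show ?thesis
    proof (cases "comp_word \<theta> \<omega> ` attr \<inter> F = {}")
      case True
      then have "comp_word \<theta> \<omega> -` F \<subseteq> space \<nu>1 - attr"
        using sets_eq_imp_space_eq[OF invariant_probD(2)[OF \<nu>1]] by auto
      moreover have "attr \<in> N1.events"
        using invariant_probD(2)[OF \<nu>1] closed_attr by (simp add: borel_closed)
      ultimately have "measure \<nu>1 (comp_word \<theta> \<omega> -` F) \<le> measure \<nu>1 (space \<nu>1 - attr)"
        by (intro N1.finite_measure_mono) auto
      also have "\<dots> = 0"
        using N1.prob_compl[OF \<open>attr \<in> N1.events\<close>] measure_invariant_prob_attr[OF \<nu>1] by simp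
      finally show ?thesis
        using measure_nonneg[of \<nu>2 "comp_word \<theta> \<omega> -` U"] by linarith
    next
      case False
      then obtain a0 where a0: "a0 \<in> attr" "comp_word \<theta> \<omega> a0 \<in> F"
        by blast
      have "attr \<subseteq> comp_word \<theta> \<omega> -` U"
      proof
        fix a assume a: "a \<in> attr"
        have "infdist (comp_word \<theta> \<omega> a) F \<le> dist (comp_word \<theta> \<omega> a) (comp_word \<theta> \<omega> a0)"
          using a0(2) by (rule infdist_le)
        also have "\<dots> \<le> L ^ n * dist a a0"
          using dist_comp_word_le_power[OF \<omega>_set] unfolding \<omega>_len .
        also have "\<dots> \<le> L ^ n * (2 * radius)"
          using dist_attr_le[OF a a0(1)] L_nonneg by (intro mult_left_mono) simp_all
        finally have "infdist (comp_word \<theta> \<omega> a) F < d"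
          using n by linarith
        then show "a \<in> comp_word \<theta> \<omega> -` U"
          by (simp add: U_def)
      qed
      then have "measure \<nu>2 attr \<le> measure \<nu>2 (comp_word \<theta> \<omega> -` U)"
        using sets2 by (rule N2.finite_measure_mono)
      then show ?thesis
        using N1.prob_le_1[of "comp_word \<theta> \<omega> -` F"] measure_invariant_prob_attr[OF \<nu>2] by linarith
    qed
  qed
  have "measure \<nu>1 F = (\<Sum>\<omega>\<in>lists_of I n. prod_word w \<omega> * measure \<nu>1 (comp_word \<theta> \<omega> -` F))"
    by (rule measure_invariant_prob_iterate[OF \<nu>1 F_borel])
  also have "\<dots> \<le> (\<Sum>\<omega>\<in>lists_of I n. prod_word w \<omega> * measure \<nu>2 (comp_word \<theta> \<omega> -` U))"
    using le prod_word_weight_pos by (intro sum_mono mult_left_mono) (auto intro: less_imp_le)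
  also have "\<dots> = measure \<nu>2 U"
    by (rule measure_invariant_prob_iterate[OF \<nu>2 U_borel, symmetric])
  finally show ?thesis
    by (simp add: U_def)
qed

lemma invariant_prob_unique:
  assumes \<nu>: "invariant_prob \<nu>"
  shows "\<nu> = mu"
proof -
  interpret N: prob_space \<nu>
    using invariant_probD[OF \<nu>] by simp
  interpret M: prob_space mu
    by (rule prob_space_mu)
  have measure_closed_le: "measure \<nu>1 F \<le> measure \<nu>2 F"
    if "invariant_prob \<nu>1" "invariant_prob \<nu>2" "closed F" for \<nu>1 \<nu>2 and F :: "'a set"
  proof (cases "F = {}")
    case False
    interpret N2: prob_space \<nu>2
      using invariant_probD[OF that(2)] by simp
    have "(\<lambda>i. measure \<nu>2 {x. infdist x F < inverse (real (Suc i))}) \<longlonglongrightarrow> measure \<nu>2 F"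
      using invariant_probD(2)[OF that(2)] that(3) False
      by (intro tendsto_measure_infdist_less N2.finite_measure_axioms)
    then show ?thesis
      using measure_invariant_prob_closed_le[OF that False] by (intro LIMSEQ_le_const) auto
  qed simp
  show ?thesis
  proof (rule measure_eqI_generator_eq[where E = "Collect closed" and \<Omega> = UNIV and A = "\<lambda>_. UNIV"])
    show "Int_stable (Collect closed)"
      by (auto simp: Int_stable_def)
    show "Collect closed \<subseteq> Pow UNIV"
      by simp
    show "sets \<nu> = sigma_sets UNIV (Collect closed)"
      using invariant_probD(2)[OF \<nu>] by (simp add: borel_eq_closed)
    show "sets mu = sigma_sets UNIV (Collect closed)"
      by (simp add: borel_eq_closed)
    fix X :: "'a set" assume "X \<in> Collect closed"
    then have "measure \<nu> X = measure mu X"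
      using measure_closed_le[OF \<nu> invariant_prob_mu] measure_closed_le[OF invariant_prob_mu \<nu>] by force
    then show "emeasure \<nu> X = emeasure mu X"
      by (simp add: N.emeasure_eq_measure M.emeasure_eq_measure)
  qed (auto simp: N.emeasure_eq_measure)
qed

lemma invariant_measure_eq_mu: "invariant_measure I \<theta> w = mu"
  unfolding invariant_measure_def
proof (rule the_equality)
  show "prob_space mu \<and> sets mu = sets borel \<and>
      (\<forall>B\<in>sets borel. emeasure mu B = (\<Sum>k\<in>I. ennreal (w k) * emeasure mu (\<theta> k -` B)))"
    using invariant_prob_mu unfolding invariant_prob_def .
  show "\<nu> = mu" if "prob_space \<nu> \<and> sets \<nu> = sets borel \<and>
      (\<forall>B\<in>sets borel. emeasure \<nu> B = (\<Sum>k\<in>I. ennreal (w k) * emeasure \<nu> (\<theta> k -` B)))" for \<nu>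
    using that invariant_prob_unique unfolding invariant_prob_def by blast
qed

text \<open>The images of one point of the attractor under all words of a fixed length form a
  codebook whose error is as small as the diameter of the level-\<open>k\<close> pieces.\<close>

lemma quant_error_eventually_less:
  assumes "0 < r" "0 < \<rho>"
  obtains n0 where "\<And>n. n0 \<le> n \<Longrightarrow> quant_error n r mu < ennreal \<rho>"
proof -
  interpret M: prob_space mu
    by (rule prob_space_mu)
  have "0 < \<rho> powr (1 / r)"
    using assms(2) by simp
  then obtain k where k: "L ^ k * (2 * radius) < \<rho> powr (1 / r)"
    using ex_power_mult_less[OF L_nonneg L_less_1] by blast
  define t where "t = L ^ k * (2 * radius)"
  have "0 \<le> t"
    using L_nonneg radius_nonneg by (simp add: t_def)
  have "t powr r < (\<rho> powr (1 / r)) powr r"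
    using k \<open>0 \<le> t\<close> assms(1) by (intro powr_less_mono2) (auto simp: t_def)
  also have "\<dots> = \<rho>"
    using assms by (simp add: powr_powr)
  finally have t_\<rho>: "t powr r < \<rho>" .
  obtain x0 where x0: "x0 \<in> attr"
    using attr_not_empty by blast
  define \<alpha> where "\<alpha> = (\<lambda>\<omega>. comp_word \<theta> \<omega> x0) ` lists_of I k"
  have fin: "finite \<alpha>" and ne: "\<alpha> \<noteq> {}"
    unfolding \<alpha>_def using finite_lists_of[OF finite_I] lists_of_not_empty[OF I_not_empty] by auto
  have "Min ((\<lambda>a. norm (z - a) powr r) ` \<alpha>) \<le> t powr r" if z: "z \<in> attr" for z
  proof -
    obtain \<omega> y where \<omega>: "\<omega> \<in> lists_of I k" "y \<in> attr" "z = comp_word \<theta> \<omega> y"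
      using attr_comp_word_cases[OF z] by blast
    then have \<omega>_set: "set \<omega> \<subseteq> I" and \<omega>_len: "length \<omega> = k"
      by (auto simp: lists_of_def)
    have "norm (z - comp_word \<theta> \<omega> x0) \<le> L ^ k * dist y x0"
      using dist_comp_word_le_power[OF \<omega>_set, of y x0] \<omega>(3) \<omega>_len by (simp add: dist_norm)
    also have "\<dots> \<le> t"
      unfolding t_def using dist_attr_le[OF \<omega>(2) x0] L_nonneg by (intro mult_left_mono) simp_all
    finally have "norm (z - comp_word \<theta> \<omega> x0) powr r \<le> t powr r"
      using assms(1) by (intro powr_mono2) simp_all
    moreover have "comp_word \<theta> \<omega> x0 \<in> \<alpha>"
      using \<omega>(1) by (simp add: \<alpha>_def)
    ultimately show ?thesis
      using fin by (meson Min_le finite_imageI imageI order_trans)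
  qed
  then have "quant_integral r mu \<alpha> \<le> (\<integral>\<^sup>+z. ennreal (t powr r) \<partial>mu)"
    unfolding quant_integral_def using AE_mu_attr
    by (intro nn_integral_mono_AE) (auto elim!: eventually_mono intro: ennreal_leI)
  also have "\<dots> < ennreal \<rho>"
    using M.emeasure_space_1 t_\<rho> assms(2) by (simp add: ennreal_lessI)
  finally have "quant_integral r mu \<alpha> < ennreal \<rho>" .
  then show ?thesis
    using quant_error_le_quant_integral[OF fin ne] by (intro that[of "card \<alpha>"]) (rule le_less_trans)
qed

end

locale separated_ifs = weighted_ifs I \<theta> L w
  for I :: "'i::countable set" and \<theta> :: "'i \<Rightarrow> 'a::euclidean_space \<Rightarrow> 'a" and L w +
  fixes S :: "'i \<Rightarrow> real"
  assumes S_pos: "\<And>k. k \<in> I \<Longrightarrow> 0 < S k"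
    and dist_map_ge: "\<And>k x y. k \<in> I \<Longrightarrow> S k * dist x y \<le> dist (\<theta> k x) (\<theta> k y)"
    and strong_separation: "SSC I \<theta>"
begin

lemma surj_map: "k \<in> I \<Longrightarrow> surj (\<theta> k)"
  by (rule surj_of_dist_ge[OF continuous_on_map S_pos dist_map_ge])

lemma ex_separation_dist:
  "\<exists>\<delta>>0. \<forall>k\<in>I. \<forall>k'\<in>I. k \<noteq> k' \<longrightarrow> (\<forall>y\<in>attr. \<forall>y'\<in>attr. \<delta> \<le> dist (\<theta> k y) (\<theta> k' y'))"
proof -
  have "\<exists>d>0. \<forall>y\<in>\<theta> k ` attr. \<forall>y'\<in>(\<Union>k'\<in>I - {k}. \<theta> k' ` attr). d \<le> dist y y'" if k: "k \<in> I" for k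
  proof (rule separate_compact_closed)
    have compact: "compact (\<theta> k' ` attr)" if "k' \<in> I" for k'
      by (rule compact_continuous_image[OF continuous_on_map[OF that] compact_attr])
    then show "compact (\<theta> k ` attr)"
      using k .
    show "closed (\<Union>k'\<in>I - {k}. \<theta> k' ` attr)"
      using compact finite_I by (intro closed_UN) (auto intro: compact_imp_closed)
    show "\<theta> k ` attr \<inter> (\<Union>k'\<in>I - {k}. \<theta> k' ` attr) = {}"
      using strong_separation k by (auto simp: SSC_def attractor_eq_attr)
  qed
  then obtain d where d: "\<And>k. k \<in> I \<Longrightarrow> 0 < d k"
    "\<And>k y y'. k \<in> I \<Longrightarrow> y \<in> \<theta> k ` attr \<Longrightarrow> y' \<in> (\<Union>k'\<in>I - {k}. \<theta> k' ` attr) \<Longrightarrow> d k \<le> dist y y'"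
    by metis
  have "0 < Min (d ` I)"
    using d(1) finite_I I_not_empty by simp
  moreover have "Min (d ` I) \<le> dist (\<theta> k y) (\<theta> k' y')"
    if "k \<in> I" "k' \<in> I" "k \<noteq> k'" "y \<in> attr" "y' \<in> attr" for k k' y y'
    using that finite_I d(2)[of k "\<theta> k y" "\<theta> k' y'"] by (force intro: order_trans[OF Min_le])
  ultimately show ?thesis
    by blast
qed

definition separation_dist :: real where
  "separation_dist = (SOME \<delta>. 0 < \<delta> \<and>
     (\<forall>k\<in>I. \<forall>k'\<in>I. k \<noteq> k' \<longrightarrow> (\<forall>y\<in>attr. \<forall>y'\<in>attr. \<delta> \<le> dist (\<theta> k y) (\<theta> k' y'))))"

lemma separation_dist_pos: "0 < separation_dist"
  and separation_dist_le:
    "k \<in> I \<Longrightarrow> k' \<in> I \<Longrightarrow> k \<noteq> k' \<Longrightarrow> y \<in> attr \<Longrightarrow> y' \<in> attr \<Longrightarrow>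
      separation_dist \<le> dist (\<theta> k y) (\<theta> k' y')"
  using someI_ex[OF ex_separation_dist] unfolding separation_dist_def[symmetric] by blast+

definition near_points :: "'a set \<Rightarrow> 'i \<Rightarrow> 'a set" where
  "near_points \<alpha> k = {a\<in>\<alpha>. \<exists>y\<in>attr. dist (\<theta> k y) a < separation_dist / 2}"

lemma near_points_disjoint:
  assumes "k \<in> I" "k' \<in> I" "k \<noteq> k'"
  shows "near_points \<alpha> k \<inter> near_points \<alpha> k' = {}"
proof (rule ccontr)
  assume "near_points \<alpha> k \<inter> near_points \<alpha> k' \<noteq> {}"
  then obtain a y y' where "y \<in> attr" "y' \<in> attr"
    and "dist (\<theta> k y) a < separation_dist / 2" "dist (\<theta> k' y') a < separation_dist / 2"
    by (auto simp: near_points_def)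
  moreover have "dist (\<theta> k y) (\<theta> k' y') \<le> dist (\<theta> k y) a + dist (\<theta> k' y') a"
    by (rule dist_triangle2)
  ultimately show False
    using separation_dist_le[OF assms] by fastforce
qed

lemma finite_near_points: "finite \<alpha> \<Longrightarrow> finite (near_points \<alpha> k)"
  by (simp add: near_points_def)

lemma sum_card_near_points_le:
  assumes "finite \<alpha>"
  shows "(\<Sum>k\<in>I. card (near_points \<alpha> k)) \<le> card \<alpha>"
proof -
  have "(\<Sum>k\<in>I. card (near_points \<alpha> k)) = card (\<Union>k\<in>I. near_points \<alpha> k)"
    using assms near_points_disjoint finite_I
    by (intro card_UN_disjoint[symmetric]) (auto simp: near_points_def)
  also have "\<dots> \<le> card \<alpha>"
    using assms by (intro card_mono) (auto simp: near_points_def)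
  finally show ?thesis .
qed

text \<open>Codebook points near the k-th piece of the attractor are pulled back by the inverse of
  the k-th map; the lower Lipschitz bound then controls the pulled back error.\<close>

lemma Min_dist_powr_pullback_le:
  assumes "0 < r" "finite \<alpha>" "k \<in> I" "x \<in> attr"
    and cover: "\<forall>z\<in>attr. \<exists>a\<in>\<alpha>. dist z a < separation_dist / 2"
  shows "S k powr r * Min ((\<lambda>b. norm (x - b) powr r) ` inv (\<theta> k) ` near_points \<alpha> k)
    \<le> Min ((\<lambda>a. norm (\<theta> k x - a) powr r) ` \<alpha>)"
proof -
  have "\<theta> k x \<in> attr"
    using map_image_attr_subset[OF assms(3)] assms(4) by blast
  then obtain a1 where a1: "a1 \<in> \<alpha>" "dist (\<theta> k x) a1 < separation_dist / 2"
    using cover by blast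
  then obtain a where a: "a \<in> \<alpha>" "\<And>b. b \<in> \<alpha> \<Longrightarrow> norm (\<theta> k x - a) \<le> norm (\<theta> k x - b)"
    and Min_eq: "Min ((\<lambda>a. norm (\<theta> k x - a) powr r) ` \<alpha>) = norm (\<theta> k x - a) powr r"
    using Min_dist_powr_nearest[OF assms(2) _ assms(1)] by blast
  have "dist (\<theta> k x) a < separation_dist / 2"
    using a(2)[OF a1(1)] a1(2) by (simp add: dist_norm)
  then have "a \<in> near_points \<alpha> k"
    using a(1) assms(4) by (auto simp: near_points_def)
  then have b: "inv (\<theta> k) a \<in> inv (\<theta> k) ` near_points \<alpha> k"
    by blast
  have "S k * norm (x - inv (\<theta> k) a) \<le> norm (\<theta> k x - a)"
    using dist_map_ge[OF assms(3), of x "inv (\<theta> k) a"] surj_f_inv_f[OF surj_map[OF assms(3)]]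
    by (simp add: dist_norm)
  have "S k powr r * Min ((\<lambda>b. norm (x - b) powr r) ` inv (\<theta> k) ` near_points \<alpha> k)
      \<le> S k powr r * norm (x - inv (\<theta> k) a) powr r"
    using finite_near_points[OF assms(2)] b by (intro mult_left_mono Min_le) auto
  also have "\<dots> = (S k * norm (x - inv (\<theta> k) a)) powr r"
    using S_pos[OF assms(3)] by (simp add: powr_mult)
  also have "\<dots> \<le> norm (\<theta> k x - a) powr r"
    using S_pos[OF assms(3)] assms(1) \<open>S k * norm (x - inv (\<theta> k) a) \<le> norm (\<theta> k x - a)\<close>
    by (intro powr_mono2) auto
  finally show ?thesis
    unfolding Min_eq .
qed

lemma quant_error_near_points_le:
  assumes "0 < r" "finite \<alpha>" "k \<in> I"
    and cover: "\<forall>z\<in>attr. \<exists>a\<in>\<alpha>. dist z a < separation_dist / 2"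
  shows "ennreal (S k powr r) * quant_error (card (near_points \<alpha> k)) r mu
    \<le> (\<integral>\<^sup>+x. ennreal (Min ((\<lambda>a. norm (\<theta> k x - a) powr r) ` \<alpha>)) \<partial>mu)"
proof -
  define \<beta> where "\<beta> = inv (\<theta> k) ` near_points \<alpha> k"
  have fin: "finite \<beta>" and card: "card \<beta> \<le> card (near_points \<alpha> k)"
    unfolding \<beta>_def using finite_near_points[OF assms(2)] by (simp_all add: card_image_le)
  have ne: "\<beta> \<noteq> {}"
  proof -
    obtain y where "y \<in> attr"
      using attr_not_empty by blast
    then have "\<theta> k y \<in> attr"
      using map_image_attr_subset[OF assms(3)] by blast
    then obtain a where "a \<in> \<alpha>" "dist (\<theta> k y) a < separation_dist / 2"
      using cover by blast
    then have "a \<in> near_points \<alpha> k"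
      using \<open>y \<in> attr\<close> by (auto simp: near_points_def)
    then show ?thesis
      by (auto simp: \<beta>_def)
  qed
  have "ennreal (S k powr r) * quant_error (card (near_points \<alpha> k)) r mu
      \<le> ennreal (S k powr r) * quant_integral r mu \<beta>"
    using fin ne card by (intro mult_left_mono quant_error_le_quant_integral) auto
  also have "\<dots> = (\<integral>\<^sup>+x. ennreal (S k powr r) * ennreal (Min ((\<lambda>b. norm (x - b) powr r) ` \<beta>)) \<partial>mu)"
    unfolding quant_integral_def using fin by (intro nn_integral_cmult[symmetric]) measurable
  also have "\<dots> \<le> (\<integral>\<^sup>+x. ennreal (Min ((\<lambda>a. norm (\<theta> k x - a) powr r) ` \<alpha>)) \<partial>mu)"
  proof (rule nn_integral_mono_AE)
    show "AE x in mu. ennreal (S k powr r) * ennreal (Min ((\<lambda>b. norm (x - b) powr r) ` \<beta>))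
        \<le> ennreal (Min ((\<lambda>a. norm (\<theta> k x - a) powr r) ` \<alpha>))"
      using AE_mu_attr
    proof eventually_elim
      case (elim x)
      have "S k powr r * Min ((\<lambda>b. norm (x - b) powr r) ` \<beta>) \<le> Min ((\<lambda>a. norm (\<theta> k x - a) powr r) ` \<alpha>)"
        unfolding \<beta>_def by (rule Min_dist_powr_pullback_le[OF assms(1-3) elim cover])
      moreover have "0 \<le> Min ((\<lambda>b. norm (x - b) powr r) ` \<beta>)"
        using fin ne by simp
      ultimately show ?case
        by (simp add: ennreal_mult[symmetric] ennreal_leI)
    qed
  qed
  finally show ?thesis .
qed

lemma weighted_quant_error_near_points_le:
  assumes "0 < r" "finite \<alpha>"
    and cover: "\<forall>z\<in>attr. \<exists>a\<in>\<alpha>. dist z a < separation_dist / 2"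
  shows "(\<Sum>k\<in>I. ennreal (w k * S k powr r) * quant_error (card (near_points \<alpha> k)) r mu)
    \<le> quant_integral r mu \<alpha>"
proof -
  have "(\<Sum>k\<in>I. ennreal (w k * S k powr r) * quant_error (card (near_points \<alpha> k)) r mu)
      = (\<Sum>k\<in>I. ennreal (w k) * (ennreal (S k powr r) * quant_error (card (near_points \<alpha> k)) r mu))"
    using weight_pos by (intro sum.cong refl) (simp add: ennreal_mult less_imp_le mult.assoc)
  also have "\<dots> \<le> (\<Sum>k\<in>I. ennreal (w k) * (\<integral>\<^sup>+x. ennreal (Min ((\<lambda>a. norm (\<theta> k x - a) powr r) ` \<alpha>)) \<partial>mu))"
    using quant_error_near_points_le[OF assms(1,2) _ cover] by (intro sum_mono mult_left_mono) auto
  also have "\<dots> = quant_integral r mu \<alpha>"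
    unfolding quant_integral_def using assms(2) by (intro nn_integral_mu[symmetric]) measurable
  finally show ?thesis .
qed

text \<open>A point of the attractor far from the codebook lies in a small cylinder piece all of whose
  points are still far from the codebook; that piece has mass bounded below.\<close>

lemma far_point_quant_integral_ge:
  assumes "0 < r"
  obtains \<rho> where "0 < \<rho>"
    and "\<And>\<alpha> x. finite \<alpha> \<Longrightarrow> \<alpha> \<noteq> {} \<Longrightarrow> x \<in> attr \<Longrightarrow> (\<And>a. a \<in> \<alpha> \<Longrightarrow> separation_dist / 2 \<le> dist x a)
      \<Longrightarrow> ennreal \<rho> \<le> quant_integral r mu \<alpha>"
proof -
  interpret M: prob_space mu
    by (rule prob_space_mu)
  obtain n where n: "L ^ n * (2 * radius) < separation_dist / 4"
    using ex_power_mult_less[OF L_nonneg L_less_1] separation_dist_pos by (metis zero_less_divide_iff zero_less_numeral)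
  define m where "m = Min (prod_word w ` lists_of I n)"
  have m_pos: "0 < m"
    unfolding m_def using finite_lists_of[OF finite_I] lists_of_not_empty[OF I_not_empty] prod_word_weight_pos
    by simp
  have "ennreal ((separation_dist / 4) powr r * m) \<le> quant_integral r mu \<alpha>"
    if \<alpha>: "finite \<alpha>" "\<alpha> \<noteq> {}" and x: "x \<in> attr" "\<And>a. a \<in> \<alpha> \<Longrightarrow> separation_dist / 2 \<le> dist x a" for \<alpha> x
  proof -
    define G where "G = (\<Inter>a\<in>\<alpha>. {z. separation_dist / 4 \<le> dist z a})"
    have G_borel: "G \<in> sets borel"
      unfolding G_def using \<alpha>(1)
      by (intro borel_closed closed_INT ballI closed_Collect_le continuous_intros)
    obtain \<omega> y where \<omega>: "\<omega> \<in> lists_of I n" "y \<in> attr" "x = comp_word \<theta> \<omega> y"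
      using attr_comp_word_cases[OF x(1)] by blast
    then have \<omega>_set: "set \<omega> \<subseteq> I" and \<omega>_len: "length \<omega> = n"
      by (auto simp: lists_of_def)
    have sub: "attr \<subseteq> comp_word \<theta> \<omega> -` G"
    proof
      fix z assume z: "z \<in> attr"
      have "dist (comp_word \<theta> \<omega> z) x \<le> L ^ n * dist z y"
        using dist_comp_word_le_power[OF \<omega>_set] unfolding \<omega>(3) \<omega>_len .
      also have "\<dots> \<le> L ^ n * (2 * radius)"
        using dist_attr_le[OF z \<omega>(2)] L_nonneg by (intro mult_left_mono) simp_all
      finally have close: "dist x (comp_word \<theta> \<omega> z) < separation_dist / 4"
        using n by (simp add: dist_commute)
      have "separation_dist / 4 \<le> dist (comp_word \<theta> \<omega> z) a" if "a \<in> \<alpha>" for a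
        using x(2)[OF that] dist_triangle[of x a "comp_word \<theta> \<omega> z"] close by linarith
      then show "z \<in> comp_word \<theta> \<omega> -` G"
        by (simp add: G_def)
    qed
    have "m \<le> prod_word w \<omega>"
      unfolding m_def using finite_lists_of[OF finite_I] \<omega>(1) by simp
    also have "\<dots> = prod_word w \<omega> * measure mu attr"
      using measure_invariant_prob_attr[OF invariant_prob_mu] by simp
    also have "\<dots> \<le> prod_word w \<omega> * measure mu (comp_word \<theta> \<omega> -` G)"
      using sub vimage_comp_word_borel[OF \<omega>_set G_borel] prod_word_weight_pos[OF \<omega>(1)]
      by (intro mult_left_mono M.finite_measure_mono) simp_all
    also have "\<dots> \<le> (\<Sum>\<omega>'\<in>lists_of I n. prod_word w \<omega>' * measure mu (comp_word \<theta> \<omega>' -` G))"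
      using \<omega>(1) finite_lists_of[OF finite_I] prod_word_weight_pos
      by (intro member_le_sum) (auto intro!: mult_nonneg_nonneg simp: less_imp_le)
    also have "\<dots> = measure mu G"
      by (rule measure_invariant_prob_iterate[OF invariant_prob_mu G_borel, symmetric])
    finally have "m \<le> measure mu G" .
    then have "ennreal ((separation_dist / 4) powr r * m) \<le> ennreal ((separation_dist / 4) powr r) * emeasure mu G"
      by (simp add: M.emeasure_eq_measure ennreal_mult[symmetric] ennreal_leI mult_left_mono)
    also have "\<dots> = (\<integral>\<^sup>+z. ennreal ((separation_dist / 4) powr r) * indicator G z \<partial>mu)"
      using G_borel by (intro nn_integral_cmult_indicator[symmetric]) simp
    also have "\<dots> \<le> quant_integral r mu \<alpha>"
      unfolding quant_integral_def
    proof (rule nn_integral_mono)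
      fix z
      have "(separation_dist / 4) powr r \<le> Min ((\<lambda>a. norm (z - a) powr r) ` \<alpha>)" if "z \<in> G"
        using that \<alpha> assms separation_dist_pos by (auto simp: G_def dist_norm intro!: powr_mono2)
      then show "ennreal ((separation_dist / 4) powr r) * indicator G z
          \<le> ennreal (Min ((\<lambda>a. norm (z - a) powr r) ` \<alpha>))"
        by (cases "z \<in> G") (simp_all add: ennreal_leI)
    qed
    finally show ?thesis .
  qed
  moreover have "0 < (separation_dist / 4) powr r * m"
    using separation_dist_pos m_pos by simp
  ultimately show ?thesis
    using that by blast
qed

text \<open>Among the codebooks with error below \<open>\<rho>\<close>, all of which cover the attractor, pick one
  whose allocation of points to the pieces minimizes the weighted sum; that allocation
  bounds the weighted sum from below by every admissible error.\<close>

lemma weighted_quant_error_le_of_less: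
  assumes "0 < r"
    and far: "\<And>\<alpha> x. finite \<alpha> \<Longrightarrow> \<alpha> \<noteq> {} \<Longrightarrow> x \<in> attr \<Longrightarrow>
      (\<And>a. a \<in> \<alpha> \<Longrightarrow> separation_dist / 2 \<le> dist x a) \<Longrightarrow> ennreal \<rho> \<le> quant_integral r mu \<alpha>"
    and less: "quant_error n r mu < ennreal \<rho>"
  shows "\<exists>ni. (\<Sum>k\<in>I. ni k) \<le> n \<and>
    (\<Sum>k\<in>I. ennreal (w k * S k powr r) * quant_error (ni k) r mu) \<le> quant_error n r mu"
proof -
  define G where "G ni = (\<Sum>k\<in>I. ennreal (w k * S k powr r) * quant_error (ni k) r mu)" for ni
  define alloc where "alloc \<alpha> = restrict (\<lambda>k. card (near_points \<alpha> k)) I" for \<alpha>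
  define Adm where "Adm = {\<alpha> :: 'a set. finite \<alpha> \<and> \<alpha> \<noteq> {} \<and> card \<alpha> \<le> n}"
  define Good where "Good = {\<alpha>\<in>Adm. quant_integral r mu \<alpha> < ennreal \<rho>}"
  have G_alloc: "G (alloc \<alpha>) \<le> quant_integral r mu \<alpha>" if "\<alpha> \<in> Good" for \<alpha>
  proof -
    have "\<forall>z\<in>attr. \<exists>a\<in>\<alpha>. dist z a < separation_dist / 2"
    proof (rule ccontr)
      assume "\<not> (\<forall>z\<in>attr. \<exists>a\<in>\<alpha>. dist z a < separation_dist / 2)"
      then obtain x where "x \<in> attr" "\<And>a. a \<in> \<alpha> \<Longrightarrow> separation_dist / 2 \<le> dist x a"
        by (auto simp: not_less)
      then have "ennreal \<rho> \<le> quant_integral r mu \<alpha>"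
        using that by (intro far) (auto simp: Good_def Adm_def)
      then show False
        using that by (auto simp: Good_def not_le[symmetric])
    qed
    then have "(\<Sum>k\<in>I. ennreal (w k * S k powr r) * quant_error (card (near_points \<alpha> k)) r mu)
        \<le> quant_integral r mu \<alpha>"
      using that assms(1) by (intro weighted_quant_error_near_points_le) (auto simp: Good_def Adm_def)
    then show ?thesis
      by (simp add: G_def alloc_def)
  qed
  have sum_alloc: "(\<Sum>k\<in>I. alloc \<alpha> k) \<le> n" if "\<alpha> \<in> Adm" for \<alpha>
    using sum_card_near_points_le[of \<alpha>] that by (simp add: alloc_def Adm_def)
  have "finite (alloc ` Good)"
  proof (rule finite_subset)
    show "alloc ` Good \<subseteq> PiE I (\<lambda>_. {..n})"
    proof
      fix f assume "f \<in> alloc ` Good"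
      then obtain \<alpha> where \<alpha>: "\<alpha> \<in> Good" "f = alloc \<alpha>"
        by blast
      have "card (near_points \<alpha> k) \<le> n" for k
        using \<alpha>(1) card_mono[of \<alpha> "near_points \<alpha> k"] by (auto simp: Good_def Adm_def near_points_def)
      then show "f \<in> PiE I (\<lambda>_. {..n})"
        by (simp add: \<alpha>(2) alloc_def)
    qed
    show "finite (PiE I (\<lambda>_. {..n}))"
      using finite_I by (simp add: finite_PiE)
  qed
  moreover have "Good \<noteq> {}"
    using less unfolding quant_error_eq_INF_quant_integral INF_less_iff by (auto simp: Good_def Adm_def)
  ultimately obtain ni where "is_arg_min G (\<lambda>ni. ni \<in> alloc ` Good) ni"
    using ex_is_arg_min_if_finite[of "alloc ` Good" G] by blast
  then obtain \<alpha>0 where \<alpha>0: "\<alpha>0 \<in> Good" "ni = alloc \<alpha>0" and min: "\<And>\<alpha>. \<alpha> \<in> Good \<Longrightarrow> G ni \<le> G (alloc \<alpha>)"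
    by (auto simp: is_arg_min_linorder)
  have "G ni \<le> quant_integral r mu \<alpha>" if "\<alpha> \<in> Adm" for \<alpha>
  proof (cases "\<alpha> \<in> Good")
    case True
    then show ?thesis
      using min G_alloc order_trans by blast
  next
    case False
    have "G ni \<le> quant_integral r mu \<alpha>0"
      using G_alloc \<alpha>0 by simp
    also have "\<dots> < ennreal \<rho>"
      using \<alpha>0(1) by (simp add: Good_def)
    also have "\<dots> \<le> quant_integral r mu \<alpha>"
      using False that by (simp add: Good_def not_less)
    finally show ?thesis
      by simp
  qed
  then have "G ni \<le> quant_error n r mu"
    unfolding quant_error_eq_INF_quant_integral by (intro INF_greatest) (simp add: Adm_def)
  moreover have "(\<Sum>k\<in>I. ni k) \<le> n"
    using sum_alloc \<alpha>0 by (simp add: Good_def)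
  ultimately show ?thesis
    unfolding G_def by blast
qed

lemma quant_error_ge_weighted_sum:
  assumes "0 < r"
  shows "\<exists>n0. \<forall>n\<ge>n0. \<exists>ni. (\<Sum>k\<in>I. ni k) \<le> n \<and>
    (\<Sum>k\<in>I. ennreal (w k * S k powr r) * quant_error (ni k) r mu) \<le> quant_error n r mu"
proof -
  obtain \<rho> where "0 < \<rho>"
    and far: "\<And>\<alpha> x. finite \<alpha> \<Longrightarrow> \<alpha> \<noteq> {} \<Longrightarrow> x \<in> attr \<Longrightarrow>
      (\<And>a. a \<in> \<alpha> \<Longrightarrow> separation_dist / 2 \<le> dist x a) \<Longrightarrow> ennreal \<rho> \<le> quant_integral r mu \<alpha>"
    using far_point_quant_integral_ge[OF assms] by blast
  obtain n0 where n0: "\<And>n. n0 \<le> n \<Longrightarrow> quant_error n r mu < ennreal \<rho>"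
    using quant_error_eventually_less[OF assms \<open>0 < \<rho>\<close>] by blast
  have "\<exists>ni. (\<Sum>k\<in>I. ni k) \<le> n \<and>
      (\<Sum>k\<in>I. ennreal (w k * S k powr r) * quant_error (ni k) r mu) \<le> quant_error n r mu" if "n0 \<le> n" for n
    by (rule weighted_quant_error_le_of_less[OF assms far n0[OF that]])
  then show ?thesis
    by blast
qed

end

context
  fixes N :: nat and f :: "nat \<Rightarrow> 'a::euclidean_space \<Rightarrow> 'a" and p s c :: "nat \<Rightarrow> real"
  assumes p_pos: "\<forall>i\<in>{1..N}. p i > 0"
    and p_sum: "(\<Sum>i\<in>{1..N}. p i) = 1"
    and sc: "\<forall>i\<in>{1..N}. 0 < s i \<and> s i \<le> c i \<and> c i < 1"
    and bilip: "\<forall>i\<in>{1..N}. \<forall>x y. s i * norm (x - y) \<le> norm (f i x - f i y) \<and>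
                                   norm (f i x - f i y) \<le> c i * norm (x - y)"
begin

lemma map_bounds:
  assumes "k \<in> {1..N}"
  shows "0 < s k" "s k \<le> c k" "c k < 1"
    and "s k * dist x y \<le> dist (f k x) (f k y)" "dist (f k x) (f k y) \<le> c k * dist x y"
  using sc[rule_format, OF assms] bilip[rule_format, OF assms] by (simp_all add: dist_norm)

lemma contracting_ifs_maps: "contracting_ifs {1..N} f (Max (c ` {1..N}))"
proof (rule contracting_ifs_Max)
  show "{1..N} \<noteq> {}"
  proof
    assume "{1..N} = {}"
    then show False
      using p_sum by simp
  qed
  show "0 \<le> c k \<and> c k < 1" if "k \<in> {1..N}" for k
    using map_bounds(1-3)[OF that] by simp
  show "dist (f k x) (f k y) \<le> c k * dist x y" if "k \<in> {1..N}" for k x y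
    using bilip that by (simp add: dist_norm)
qed simp

lemma dist_comp_word_bounds:
  assumes "set \<omega> \<subseteq> {1..N}"
  shows "prod_word s \<omega> * dist x y \<le> dist (comp_word f \<omega> x) (comp_word f \<omega> y)"
    and "dist (comp_word f \<omega> x) (comp_word f \<omega> y) \<le> prod_word c \<omega> * dist x y"
proof -
  have k: "k \<in> {1..N}" if "k \<in> set \<omega>" for k
    using assms that by blast
  show "prod_word s \<omega> * dist x y \<le> dist (comp_word f \<omega> x) (comp_word f \<omega> y)"
    using map_bounds(1,4)[OF k] by (intro dist_comp_word_ge) (simp_all add: less_imp_le)
  show "dist (comp_word f \<omega> x) (comp_word f \<omega> y) \<le> prod_word c \<omega> * dist x y"
  proof (rule dist_comp_word_le)
    show "0 \<le> c k" if "k \<in> set \<omega>" for k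
      using map_bounds(1,2)[OF k[OF that]] by simp
  qed (rule map_bounds(5)[OF k])
qed

lemma prod_word_bounds:
  assumes "set \<omega> \<subseteq> {1..N}"
  shows "0 < prod_word s \<omega>" and "prod_word s \<omega> \<le> prod_word c \<omega>"
    and "prod_word c \<omega> \<le> Max (c ` {1..N}) ^ length \<omega>"
proof -
  have k: "k \<in> {1..N}" if "k \<in> set \<omega>" for k
    using assms that by blast
  have s: "0 < s k" "0 \<le> s k \<and> s k \<le> c k" if "k \<in> set \<omega>" for k
    using map_bounds(1,2)[OF k[OF that]] by simp_all
  have c: "0 \<le> c k \<and> c k \<le> Max (c ` {1..N})" if "k \<in> set \<omega>" for k
    using map_bounds(1,2)[OF k[OF that]] Max_ge[OF finite_imageI[OF finite_atLeastAtMost] imageI[OF k[OF that], of c]]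
    by linarith
  show "0 < prod_word s \<omega>"
    using s(1) by (rule prod_word_pos)
  show "prod_word s \<omega> \<le> prod_word c \<omega>"
    using s(2) by (rule prod_word_mono)
  have "prod_word c \<omega> \<le> prod_word (\<lambda>_. Max (c ` {1..N})) \<omega>"
    using c by (rule prod_word_mono)
  then show "prod_word c \<omega> \<le> Max (c ` {1..N}) ^ length \<omega>"
    by (simp add: prod_word_const)
qed

lemma prod_word_less_1:
  assumes "set \<omega> \<subseteq> {1..N}" "\<omega> \<noteq> []"
  shows "prod_word c \<omega> < 1"
proof -
  interpret contracting_ifs "{1..N}" f "Max (c ` {1..N})"
    by (rule contracting_ifs_maps)
  have "Max (c ` {1..N}) ^ length \<omega> < 1"
    using L_nonneg L_less_1 assms(2) by (simp add: power_less_one_iff)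
  then show ?thesis
    using prod_word_bounds(3)[OF assms(1)] by linarith
qed

lemma derived_map_bounds:
  assumes "set \<sigma> \<subseteq> {1..N}" "\<tau> \<in> words N m" "1 \<le> m"
  shows "prod_word s \<tau> * prod_word s \<sigma> \<in> {0<..<1} \<and>
    prod_word c \<tau> * prod_word c \<sigma> \<in> {0<..<1} \<and>
    (\<forall>x y. prod_word s \<tau> * prod_word s \<sigma> * norm (x - y)
            \<le> norm ((comp_word f \<tau> \<circ> comp_word f \<sigma>) x - (comp_word f \<tau> \<circ> comp_word f \<sigma>) y)
        \<and> norm ((comp_word f \<tau> \<circ> comp_word f \<sigma>) x - (comp_word f \<tau> \<circ> comp_word f \<sigma>) y)
            \<le> prod_word c \<tau> * prod_word c \<sigma> * norm (x - y))"
proof -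
  have \<omega>: "set (\<tau> @ \<sigma>) \<subseteq> {1..N}" "\<tau> @ \<sigma> \<noteq> []"
    using assms by (auto simp: words_def)
  show ?thesis
    using prod_word_bounds(1,2)[OF \<omega>(1)] prod_word_less_1[OF \<omega>] dist_comp_word_bounds[OF \<omega>(1)]
    by (simp add: prod_word_append comp_word_append dist_norm)
qed

lemma derived_separated_ifs:
  assumes \<sigma>: "set \<sigma> \<subseteq> {1..N}" and "1 \<le> m"
    and into: "\<forall>i\<in>{1..N}. f i ` U \<subseteq> U"
    and disjoint: "\<forall>i\<in>{1..N}. \<forall>j\<in>{1..N}. i \<noteq> j \<longrightarrow> f i ` U \<inter> f j ` U = {}"
    and \<sigma>_U: "comp_word f \<sigma> ` attractor {1..N} f \<subseteq> U"
  shows "separated_ifs (words N m) (\<lambda>\<tau>. comp_word f \<tau> \<circ> comp_word f \<sigma>) (Max (c ` {1..N}) ^ m)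
    (prod_word p) (\<lambda>\<tau>. prod_word s \<tau> * prod_word s \<sigma>)"
proof -
  interpret F: contracting_ifs "{1..N}" f "Max (c ` {1..N})"
    by (rule contracting_ifs_maps)
  let ?g = "\<lambda>\<tau>. comp_word f \<tau> \<circ> comp_word f \<sigma>"
  have words: "\<tau> \<in> words N m \<longleftrightarrow> \<tau> \<in> lists_of {1..N} m" for \<tau>
    by (simp add: words_eq_lists_of)
  have \<tau>\<sigma>: "set (\<tau> @ \<sigma>) \<subseteq> {1..N}" "m \<le> length (\<tau> @ \<sigma>)" if "\<tau> \<in> words N m" for \<tau>
    using that \<sigma> by (auto simp: words_def)
  interpret G: weighted_ifs "words N m" ?g "Max (c ` {1..N}) ^ m" "prod_word p"
  proof unfold_locales
    show "finite (words N m)"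
      by (simp add: words_eq_lists_of finite_lists_of)
    show "words N m \<noteq> {}"
      using F.I_not_empty by (simp add: words_eq_lists_of lists_of_not_empty)
    show "0 \<le> Max (c ` {1..N}) ^ m"
      using F.L_nonneg by simp
    show "Max (c ` {1..N}) ^ m < 1"
      using F.L_nonneg F.L_less_1 \<open>1 \<le> m\<close> by (simp add: power_less_one_iff)
    show "dist (?g \<tau> x) (?g \<tau> y) \<le> Max (c ` {1..N}) ^ m * dist x y" if "\<tau> \<in> words N m" for \<tau> x y
    proof -
      have "dist (?g \<tau> x) (?g \<tau> y) \<le> prod_word c (\<tau> @ \<sigma>) * dist x y"
        using dist_comp_word_bounds(2)[OF \<tau>\<sigma>(1)[OF that]] by (simp add: comp_word_append)
      also have "\<dots> \<le> Max (c ` {1..N}) ^ length (\<tau> @ \<sigma>) * dist x y"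
        using prod_word_bounds(3)[OF \<tau>\<sigma>(1)[OF that]] by (simp add: mult_right_mono)
      also have "\<dots> \<le> Max (c ` {1..N}) ^ m * dist x y"
        using F.L_nonneg F.L_less_1 \<tau>\<sigma>(2)[OF that] by (intro mult_right_mono power_decreasing) simp_all
      finally show ?thesis .
    qed
    show "0 < prod_word p \<tau>" if "\<tau> \<in> words N m" for \<tau>
      using that p_pos by (intro prod_word_pos) (auto simp: words_def)
    show "sum (prod_word p) (words N m) = 1"
      using sum_prod_word_lists_of[where I = "{1..N}" and n = m and w = p] p_sum
      by (simp add: words_eq_lists_of)
  qed
  have "G.attr \<subseteq> F.attr"
  proof (rule G.attr_subset_of_invariant[OF F.closed_attr F.attr_not_empty])
    fix \<tau> assume "\<tau> \<in> words N m"
    then show "?g \<tau> ` F.attr \<subseteq> F.attr"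
      using F.comp_word_image_attr_subset[OF \<tau>\<sigma>(1)] by (simp add: comp_word_append)
  qed
  then have "comp_word f \<sigma> ` G.attr \<subseteq> U"
    using \<sigma>_U unfolding F.attractor_eq_attr by blast
  then have G_attr: "?g \<tau> ` G.attr \<subseteq> comp_word f \<tau> ` U" for \<tau>
    unfolding image_comp[symmetric] by (rule image_mono)
  have inj: "inj (f i)" if "i \<in> {1..N}" for i
  proof (rule injI)
    fix x y assume "f i x = f i y"
    then have "s i * dist x y \<le> 0"
      using map_bounds(4)[OF that, of x y] by simp
    then show "x = y"
      using map_bounds(1)[OF that] by (simp add: mult_le_0_iff)
  qed
  show ?thesis
  proof (intro separated_ifs.intro G.weighted_ifs_axioms separated_ifs_axioms.intro)
    show "0 < prod_word s \<tau> * prod_word s \<sigma>" if "\<tau> \<in> words N m" for \<tau>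
      using prod_word_bounds(1)[OF \<tau>\<sigma>(1)[OF that]] by (simp add: prod_word_append)
    show "prod_word s \<tau> * prod_word s \<sigma> * dist x y \<le> dist (?g \<tau> x) (?g \<tau> y)" if "\<tau> \<in> words N m" for \<tau> x y
      using dist_comp_word_bounds(1)[OF \<tau>\<sigma>(1)[OF that]] by (simp add: prod_word_append comp_word_append)
    show "SSC (words N m) ?g"
      unfolding SSC_def G.attractor_eq_attr
    proof (intro ballI impI)
      fix \<tau> \<tau>' assume "\<tau> \<in> words N m" "\<tau>' \<in> words N m" "\<tau> \<noteq> \<tau>'"
      then have "comp_word f \<tau> ` U \<inter> comp_word f \<tau>' ` U = {}"
        using into disjoint inj unfolding words by (intro comp_word_images_disjoint) auto
      moreover have "?g \<tau> ` G.attr \<inter> ?g \<tau>' ` G.attr \<subseteq> comp_word f \<tau> ` U \<inter> comp_word f \<tau>' ` U"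
        by (intro Int_mono G_attr)
      ultimately show "?g \<tau> ` G.attr \<inter> ?g \<tau>' ` G.attr = {}"
        by blast
    qed
  qed
qed

end

theorem mainTheorem18:
  fixes N :: nat
    and f :: "nat \<Rightarrow> 'a::euclidean_space \<Rightarrow> 'a"
    and p s c :: "nat \<Rightarrow> real"
  assumes p_pos: "\<forall>i\<in>{1..N}. p i > 0"
    and p_sum: "(\<Sum>i\<in>{1..N}. p i) = 1"
    and sc: "\<forall>i\<in>{1..N}. 0 < s i \<and> s i \<le> c i \<and> c i < 1"
    and bilip: "\<forall>i\<in>{1..N}. \<forall>x y. s i * norm (x - y) \<le> norm (f i x - f i y) \<and>
                                   norm (f i x - f i y) \<le> c i * norm (x - y)"
    and sosc: "SOSC {1..N} f"
  shows "\<exists>\<sigma>. set \<sigma> \<subseteq> {1..N} \<and>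
    (\<forall>m\<ge>1.
      (\<forall>\<tau>\<in>words N m.
          prod_word s \<tau> * prod_word s \<sigma> \<in> {0<..<1} \<and>
          prod_word c \<tau> * prod_word c \<sigma> \<in> {0<..<1} \<and>
          (\<forall>x y. prod_word s \<tau> * prod_word s \<sigma> * norm (x - y)
                   \<le> norm ((comp_word f \<tau> \<circ> comp_word f \<sigma>) x - (comp_word f \<tau> \<circ> comp_word f \<sigma>) y)
               \<and> norm ((comp_word f \<tau> \<circ> comp_word f \<sigma>) x - (comp_word f \<tau> \<circ> comp_word f \<sigma>) y)
                   \<le> prod_word c \<tau> * prod_word c \<sigma> * norm (x - y))) \<and>
      SSC (words N m) (\<lambda>\<tau>. comp_word f \<tau> \<circ> comp_word f \<sigma>) \<and>
      (\<forall>r>0. \<exists>n0::nat. \<forall>n\<ge>n0. \<exists>ni :: nat list \<Rightarrow> nat.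
          (\<Sum>\<tau>\<in>words N m. ni \<tau>) \<le> n \<and>
          quant_error n r (invariant_measure (words N m) (\<lambda>\<tau>. comp_word f \<tau> \<circ> comp_word f \<sigma>) (prod_word p))
          \<ge> (\<Sum>\<tau>\<in>words N m. ennreal (prod_word p \<tau> * (prod_word s \<tau> * prod_word s \<sigma>) powr r) *
               quant_error (ni \<tau>) r (invariant_measure (words N m) (\<lambda>\<tau>. comp_word f \<tau> \<circ> comp_word f \<sigma>) (prod_word p)))))"
proof -
  interpret F: contracting_ifs "{1..N}" f "Max (c ` {1..N})"
    by (rule contracting_ifs_maps[OF p_pos p_sum sc bilip])
  obtain U where U: "open U" "\<forall>i\<in>{1..N}. f i ` U \<subseteq> U"
      "\<forall>i\<in>{1..N}. \<forall>j\<in>{1..N}. i \<noteq> j \<longrightarrow> f i ` U \<inter> f j ` U = {}" "U \<inter> F.attr \<noteq> {}"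
    using sosc unfolding SOSC_def F.attractor_eq_attr by (elim exE conjE) (rule that)
  obtain \<sigma> where \<sigma>: "set \<sigma> \<subseteq> {1..N}" "comp_word f \<sigma> ` F.attr \<subseteq> U"
    using F.ex_comp_word_image_attr_subset[OF U(1,4)] by blast
  show ?thesis
  proof (intro exI[of _ \<sigma>] conjI allI impI \<sigma>(1))
    fix m :: nat assume m: "1 \<le> m"
    interpret G: separated_ifs "words N m" "\<lambda>\<tau>. comp_word f \<tau> \<circ> comp_word f \<sigma>" "Max (c ` {1..N}) ^ m"
        "prod_word p" "\<lambda>\<tau>. prod_word s \<tau> * prod_word s \<sigma>"
      using \<sigma>(2) unfolding F.attractor_eq_attr[symmetric]
      by (rule derived_separated_ifs[OF p_pos p_sum sc bilip \<sigma>(1) m U(2,3)])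
    show "\<forall>\<tau>\<in>words N m.
          prod_word s \<tau> * prod_word s \<sigma> \<in> {0<..<1} \<and>
          prod_word c \<tau> * prod_word c \<sigma> \<in> {0<..<1} \<and>
          (\<forall>x y. prod_word s \<tau> * prod_word s \<sigma> * norm (x - y)
                   \<le> norm ((comp_word f \<tau> \<circ> comp_word f \<sigma>) x - (comp_word f \<tau> \<circ> comp_word f \<sigma>) y)
               \<and> norm ((comp_word f \<tau> \<circ> comp_word f \<sigma>) x - (comp_word f \<tau> \<circ> comp_word f \<sigma>) y)
                   \<le> prod_word c \<tau> * prod_word c \<sigma> * norm (x - y))"
      by (rule ballI, rule derived_map_bounds[OF p_pos p_sum sc bilip \<sigma>(1) _ m])
    show "SSC (words N m) (\<lambda>\<tau>. comp_word f \<tau> \<circ> comp_word f \<sigma>)"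
      by (rule G.strong_separation)
    fix r :: real assume "0 < r"
    then show "\<exists>n0. \<forall>n\<ge>n0. \<exists>ni. (\<Sum>\<tau>\<in>words N m. ni \<tau>) \<le> n \<and>
          quant_error n r (invariant_measure (words N m) (\<lambda>\<tau>. comp_word f \<tau> \<circ> comp_word f \<sigma>) (prod_word p))
          \<ge> (\<Sum>\<tau>\<in>words N m. ennreal (prod_word p \<tau> * (prod_word s \<tau> * prod_word s \<sigma>) powr r) *
               quant_error (ni \<tau>) r (invariant_measure (words N m) (\<lambda>\<tau>. comp_word f \<tau> \<circ> comp_word f \<sigma>) (prod_word p)))"
      unfolding G.invariant_measure_eq_mu by (rule G.quant_error_ge_weighted_sum)
  qed
qed

end
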